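(* Let $\nu, \delta$ be positive real numbers with $\nu \geq 1$, and let $s \geq 4$ be an even number. Suppose $A$ is a finite, non-empty set of real numbers with $E_s(A) \geq |A|^{2s - \nu}$. Then either \[ E_{s/2}(A) > |A|^{s - \nu + \delta}, \] or there exists $A' \subseteq A$ such that $|A'| \gg |A|^{1 - 82\delta}$ and, for each $m, n \in \mathbb{N} \cup \{0\}$, \[ |mA' - nA'| \ll_{m,n} |A|^{\nu + 240(m+n)\delta}. \]
   Context: For a finite set $X$ of reals and $t \in \mathbb{N}$, $E_t(X) = |\{(x_1,\dots,x_{2t}) \in X^{2t} : x_1 + \dots + x_t = x_{t+1} + \dots + x_{2t}\}|$. For $m, n \geq 0$, $mX - nX = \{x_1 + \dots + x_m - y_1 - \dots - y_n : x_i, y_j \in X\}$. The implied constant in $|A'| \gg |A|^{1-82\delta}$ is absolute; $X \ll_{m,n} Y$ means $|X| \leq C_{m,n}|Y|$ with $C_{m,n} > 0$ depending only on $m,n$. *)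

theory Defs
  imports Complex_Main "HOL-Library.FuncSet"
begin

definition energy :: "nat \<Rightarrow> real set \<Rightarrow> nat" where
  "energy t X = card {f \<in> {0..<2*t} \<rightarrow>\<^sub>E X.
      (\<Sum>i<t. f i) = (\<Sum>i<t. f (t + i))}"

definition sumdiff :: "nat \<Rightarrow> nat \<Rightarrow> real set \<Rightarrow> real set" where
  "sumdiff m n X = {(\<Sum>i<m. x i) - (\<Sum>j<n. y j) | x y.
      (\<forall>i<m. x i \<in> X) \<and> (\<forall>j<n. y j \<in> X)}"

end

theory Submission
  imports Defs "HOL-Library.Set_Algebras" "HOL-Analysis.Convex"
begin

text \<open>
  Write \<open>k = s/2\<close> and let \<open>r(x)\<close> be the number of \<open>k\<close>-tuples from \<open>A\<close> with sum \<open>x\<close>. Then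
  \<open>\<Sum>r = |A|^k\<close>, \<open>E\<^sub>k(A) = \<Sum>r\<^sup>2\<close>, and \<open>E\<^sub>s(A)\<close> is the sum of the squares of the convolution
  \<open>r \<star> r\<close>. So if \<open>E\<^sub>k(A)\<close> is small, the hypothesis on \<open>E\<^sub>s(A)\<close> says that the weight \<open>r\<close> on \<open>kA\<close>
  has nearly maximal additive energy relative to \<open>\<Sum>r\<close> and \<open>\<Sum>r\<^sup>2\<close>. The values of \<open>r\<close> far below
  or far above \<open>E\<^sub>k(A) / |A|^k\<close> carry at most half of that energy, so the level set on which \<open>r\<close>
  is roughly constant has large additive energy, and the Balog-Szemeredi-Gowers theorem finds
  in it a large set \<open>Q\<close> with small doubling. Pigeonholing over the first \<open>k - 1\<close> summands, some
  translate of \<open>A\<close> meets \<open>Q\<close> in a set \<open>A'\<close> with \<open>|A'| \<ge> |A|^(1 - 82\<delta>) / 2^40\<close>, and the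
  Pluennecke-Ruzsa inequality for \<open>Q\<close> bounds \<open>|mA' - nA'|\<close>.
\<close>

section \<open>Sumsets and the Pluennecke-Ruzsa inequality\<close>

lemma Ruzsa_triangle_inequality:
  fixes X U V :: "'a::ab_group_add set"
  assumes "finite X" "finite U" "finite V"
  shows "card X * card (U + uminus ` V) \<le> card (X + uminus ` U) * card (X + uminus ` V)"
proof -
  define D where "D = U + uminus ` V"
  have "\<forall>d\<in>D. \<exists>p\<in>U \<times> V. d = fst p - snd p"
    unfolding D_def by (force elim!: set_plus_elim)
  then obtain rep where rep: "\<And>d. d \<in> D \<Longrightarrow> rep d \<in> U \<times> V \<and> d = fst (rep d) - snd (rep d)"
    by metis
  define h where "h = (\<lambda>(x, d). (x - fst (rep d), x - snd (rep d)))"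
  have recover: "d = snd (h (x, d)) - fst (h (x, d))" if "d \<in> D" for x d
    using rep[OF that] by (simp add: h_def)
  have "inj_on h (X \<times> D)"
  proof (rule inj_onI, clarify)
    fix x d x' d'
    assume "d \<in> D" "d' \<in> D" "h (x, d) = h (x', d')"
    then have "d = d'"
      using recover by metis
    with \<open>h (x, d) = h (x', d')\<close> show "x = x' \<and> d = d'" by (simp add: h_def)
  qed
  moreover have "h p \<in> (X + uminus ` U) \<times> (X + uminus ` V)" if p: "p \<in> X \<times> D" for p
  proof -
    obtain x d where "p = (x, d)" "x \<in> X" "d \<in> D"
      using p by (cases p) auto
    with rep[OF \<open>d \<in> D\<close>]
    have "x + - fst (rep d) \<in> X + uminus ` U" "x + - snd (rep d) \<in> X + uminus ` V"
      by (auto simp del: add_uminus_conv_diff intro!: set_plus_intro imageI)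
    with \<open>p = (x, d)\<close> show ?thesis
      by (simp add: h_def)
  qed
  then have "h ` (X \<times> D) \<subseteq> (X + uminus ` U) \<times> (X + uminus ` V)"
    by (rule image_subsetI)
  ultimately have "card (X \<times> D) \<le> card ((X + uminus ` U) \<times> (X + uminus ` V))"
    by (intro card_inj_on_le) (auto simp: finite_set_plus assms)
  then show ?thesis by (simp add: D_def card_cartesian_product)
qed

lemma Petridis_new_sums_le:
  fixes X B C :: "'a::ab_group_add set" and c :: 'a
  defines "Z \<equiv> {x \<in> X. {x} + B + {c} \<subseteq> X + B + C}"
  assumes "finite X" "finite B" "finite C"
  shows "card (X + B + insert c C) + card (Z + B) \<le> card (X + B + C) + card (X + B)"
proof -
  have "Z \<subseteq> X"
    by (auto simp: Z_def)
  then have "Z + B \<subseteq> X + B"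
    by (intro set_plus_mono2) auto
  moreover have "finite (X + B)"
    using assms by (simp add: finite_set_plus)
  ultimately have fin: "finite (Z + B)" "finite (X + B)" "Z + B \<subseteq> X + B"
    using finite_subset by auto
  have "(+) c ` (Z + B) \<subseteq> X + B + C"
    by (force simp: Z_def add.commute elim!: set_plus_elim)
  then have "X + B + insert c C \<subseteq> (X + B + C) \<union> (+) c ` (X + B - (Z + B))"
    by (auto simp: set_plus_insert)
  then have "card (X + B + insert c C) \<le> card ((X + B + C) \<union> (+) c ` (X + B - (Z + B)))"
    using assms by (intro card_mono) (auto simp: finite_set_plus)
  also have "\<dots> \<le> card (X + B + C) + card ((+) c ` (X + B - (Z + B)))"
    by (rule card_Un_le)
  finally have "card (X + B + insert c C) \<le> card (X + B + C) + card ((+) c ` (X + B - (Z + B)))" .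
  moreover have "card ((+) c ` (X + B - (Z + B))) + card (Z + B) = card (X + B)"
    using fin by (simp add: card_image card_Diff_subset card_mono)
  ultimately show ?thesis
    by linarith
qed

lemma Petridis_new_translates_ge:
  fixes X B C :: "'a::ab_group_add set" and c :: 'a
  defines "Z \<equiv> {x \<in> X. {x} + B + {c} \<subseteq> X + B + C}"
  assumes "finite X" "finite C"
  shows "card (X + C) + card X \<le> card (X + insert c C) + card Z"
proof -
  have disjoint: "(X + C) \<inter> (+) c ` (X - Z) = {}"
  proof (rule ccontr)
    assume "(X + C) \<inter> (+) c ` (X - Z) \<noteq> {}"
    then obtain x x' c' where "x \<in> X" "x \<notin> Z" "x' \<in> X" "c' \<in> C" "c + x = x' + c'"
      by (force elim!: set_plus_elim)
    then have "{x} + B + {c} \<subseteq> X + B + C"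
      by (force simp: algebra_simps elim!: set_plus_elim)
    with \<open>x \<in> X\<close> \<open>x \<notin> Z\<close> show False
      by (simp add: Z_def)
  qed
  have "(X + C) \<union> (+) c ` (X - Z) \<subseteq> X + insert c C"
    by (auto simp: set_plus_insert)
  then have "card ((X + C) \<union> (+) c ` (X - Z)) \<le> card (X + insert c C)"
    using assms by (intro card_mono) (auto simp: finite_set_plus)
  moreover have "card ((X + C) \<union> (+) c ` (X - Z)) = card (X + C) + card (X - Z)"
    using disjoint assms by (simp add: card_Un_disjoint card_image finite_set_plus)
  moreover have "card (X - Z) + card Z = card X"
    using assms finite_subset[of Z X] by (auto simp: Z_def card_Diff_subset card_mono)
  ultimately show ?thesis
    by linarith
qed

lemma Petridis_lemma:
  fixes X B C :: "'a::ab_group_add set"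
  assumes X: "finite X" and B: "finite B" and C: "finite C"
    and minimal: "\<And>Z. Z \<subseteq> X \<Longrightarrow> card (X + B) * card Z \<le> card (Z + B) * card X"
  shows "card (X + B + C) * card X \<le> card (X + B) * card (X + C)"
  using C
proof (induction C rule: finite_induct)
  case empty
  then show ?case by simp
next
  case (insert c C)
  define Z where "Z = {x \<in> X. {x} + B + {c} \<subseteq> X + B + C}"
  have "Z \<subseteq> X"
    by (auto simp: Z_def)
  have new_sums: "card (X + B + insert c C) + card (Z + B) \<le> card (X + B + C) + card (X + B)"
    unfolding Z_def using X B insert.hyps(1) by (rule Petridis_new_sums_le)
  have new_translates: "card (X + C) + card X \<le> card (X + insert c C) + card Z"
    unfolding Z_def using X insert.hyps(1) by (rule Petridis_new_translates_ge)
  have "card (X + B + insert c C) * card X + card (Z + B) * card X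
      \<le> card (X + B + C) * card X + card (X + B) * card X"
    using new_sums by (metis add_mult_distrib mult_le_mono1)
  also have "\<dots> \<le> card (X + B) * card (X + C) + card (X + B) * card X"
    using insert.IH by simp
  also have "\<dots> \<le> card (X + B) * card (X + insert c C) + card (X + B) * card Z"
    using new_translates by (metis add_mult_distrib2 mult_le_mono2)
  also have "\<dots> \<le> card (X + B) * card (X + insert c C) + card (Z + B) * card X"
    using minimal[OF \<open>Z \<subseteq> X\<close>] by simp
  finally show ?case by simp
qed

fun iterated_sumset :: "nat \<Rightarrow> 'a::comm_monoid_add set \<Rightarrow> 'a set" where
  "iterated_sumset 0 X = {0}"
| "iterated_sumset (Suc m) X = X + iterated_sumset m X"

lemma finite_iterated_sumset: "finite X \<Longrightarrow> finite (iterated_sumset m X)"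
  by (induction m) (auto simp: finite_set_plus)

lemma iterated_sumset_eq: "iterated_sumset m X = {(\<Sum>i<m. x i) | x. \<forall>i<m. x i \<in> X}"
proof (induction m)
  case 0
  then show ?case by auto
next
  case (Suc m)
  show ?case
  proof (intro set_eqI iffI)
    fix z
    assume "z \<in> iterated_sumset (Suc m) X"
    then obtain a x where "a \<in> X" "\<forall>i<m. x i \<in> X" "z = a + (\<Sum>i<m. x i)"
      using Suc.IH by (auto elim!: set_plus_elim)
    then have "(\<forall>i<Suc m. (x(m := a)) i \<in> X) \<and> z = (\<Sum>i<Suc m. (x(m := a)) i)"
      by (simp add: less_Suc_eq add.commute)
    then show "z \<in> {(\<Sum>i<Suc m. x i) | x. \<forall>i<Suc m. x i \<in> X}" by blast
  next
    fix z
    assume "z \<in> {(\<Sum>i<Suc m. x i) | x. \<forall>i<Suc m. x i \<in> X}"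
    then obtain x where x: "\<forall>i<Suc m. x i \<in> X" "z = x m + (\<Sum>i<m. x i)"
      by (auto simp: add.commute)
    have "(\<Sum>i<m. x i) \<in> iterated_sumset m X"
      using Suc.IH x(1) by auto
    with x show "z \<in> iterated_sumset (Suc m) X"
      by auto
  qed
qed

lemma image_uminus_set_plus:
  fixes X Y :: "'a::ab_group_add set"
  shows "uminus ` (X + Y) = uminus ` X + uminus ` Y"
  by (force simp: set_plus_def image_iff add.commute)

lemma image_uminus_iterated_sumset:
  fixes X :: "'a::ab_group_add set"
  shows "uminus ` iterated_sumset m X = iterated_sumset m (uminus ` X)"
  by (induction m) (simp_all add: image_uminus_set_plus)

lemma sumdiff_eq_iterated_sumset:
  "sumdiff m n X = iterated_sumset m X + uminus ` iterated_sumset n X"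
  unfolding sumdiff_def iterated_sumset_eq set_plus_def by (force simp: image_iff)

lemma exists_subset_minimal_doubling_ratio:
  fixes Q B :: "'a::ab_group_add set"
  assumes "finite Q" "Q \<noteq> {}"
  obtains X where "X \<subseteq> Q" "X \<noteq> {}" "card (X + B) * card Q \<le> card (Q + B) * card X"
    and "\<And>Z. Z \<subseteq> X \<Longrightarrow> card (X + B) * card Z \<le> card (Z + B) * card X"
proof -
  define ratio where "ratio Z = real (card (Z + B)) / card Z" for Z
  define F where "F = {Z. Z \<subseteq> Q \<and> Z \<noteq> {}}"
  have "finite (ratio ` F)" "Q \<in> F"
    using assms by (simp_all add: F_def)
  then have "Min (ratio ` F) \<in> ratio ` F"
    by (intro Min_in) auto
  then obtain X where X: "X \<in> F" "ratio X = Min (ratio ` F)"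
    by auto
  have minimal: "card (X + B) * card Z \<le> card (Z + B) * card X" if "Z \<in> F" for Z
  proof -
    have "card Z > 0" "card X > 0"
      using that X(1) assms finite_subset by (auto simp: F_def card_gt_0_iff)
    moreover have "ratio X \<le> ratio Z"
      using X that \<open>finite (ratio ` F)\<close> by simp
    ultimately have "real (card (X + B)) * card Z \<le> real (card (Z + B)) * card X"
      by (simp add: ratio_def field_simps)
    then show ?thesis
      by (simp flip: of_nat_mult)
  qed
  show ?thesis
  proof (rule that)
    show "X \<subseteq> Q" "X \<noteq> {}"
      using X(1) by (auto simp: F_def)
    show "card (X + B) * card Q \<le> card (Q + B) * card X"
      using minimal \<open>Q \<in> F\<close> .
    show "card (X + B) * card Z \<le> card (Z + B) * card X" if "Z \<subseteq> X" for Z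
      using minimal[of Z] that X(1) by (cases "Z = {}") (auto simp: F_def)
  qed
qed

lemma Petridis_iterated:
  fixes X B :: "'a::ab_group_add set"
  assumes "finite X" "finite B"
    and minimal: "\<And>Z. Z \<subseteq> X \<Longrightarrow> card (X + B) * card Z \<le> card (Z + B) * card X"
  shows "card (X + iterated_sumset h B) * card X ^ h \<le> card (X + B) ^ h * card X"
proof (induction h)
  case 0
  then show ?case by simp
next
  case (Suc h)
  have "card (X + iterated_sumset (Suc h) B) * card X ^ Suc h
      = card (X + B + iterated_sumset h B) * card X * card X ^ h"
    by (simp add: add.assoc mult_ac)
  also have "\<dots> \<le> card (X + B) * card (X + iterated_sumset h B) * card X ^ h"
    using Petridis_lemma[OF assms(1,2) finite_iterated_sumset minimal] assms(2) by simp
  also have "\<dots> \<le> card (X + B) * (card (X + B) ^ h * card X)"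
    using Suc.IH by (simp add: mult.assoc)
  finally show ?case by (simp add: mult_ac)
qed

theorem Pluennecke_Ruzsa_inequality:
  fixes Q :: "'a::ab_group_add set" and L :: real
  assumes Q: "finite Q" "Q \<noteq> {}" and doubling: "card (Q + uminus ` Q) \<le> L * card Q"
  shows "card (iterated_sumset m Q + uminus ` iterated_sumset n Q) \<le> L ^ (m + n) * card Q"
proof -
  define B where "B = uminus ` Q"
  obtain X where X: "X \<subseteq> Q" "X \<noteq> {}" and X_ratio: "card (X + B) * card Q \<le> card (Q + B) * card X"
    and minimal: "\<And>Z. Z \<subseteq> X \<Longrightarrow> card (X + B) * card Z \<le> card (Z + B) * card X"
    using exists_subset_minimal_doubling_ratio[OF Q] by blast
  have fin: "finite X" "finite B" "card X > 0"
    using X Q finite_subset by (auto simp: B_def card_gt_0_iff)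
  define \<rho> where "\<rho> = real (card (X + B)) / card X"
  have "\<rho> \<le> L"
  proof -
    have "\<rho> \<le> real (card (Q + B)) / card Q"
      using X_ratio fin Q by (simp add: \<rho>_def field_simps card_gt_0_iff flip: of_nat_mult)
    also have "\<dots> \<le> L"
      using doubling Q by (simp add: B_def divide_le_eq card_gt_0_iff)
    finally show ?thesis .
  qed
  have \<rho>_pos: "\<rho> \<ge> 0" by (simp add: \<rho>_def)
  have iterate: "card (X + uminus ` iterated_sumset h Q) \<le> \<rho> ^ h * card X" for h
  proof -
    have "real (card (X + iterated_sumset h B)) * card X ^ h \<le> real (card (X + B)) ^ h * card X"
      using Petridis_iterated[OF fin(1,2) minimal, of h] by (simp flip: of_nat_mult of_nat_power)
    then show ?thesis
      using fin by (simp add: \<rho>_def B_def image_uminus_iterated_sumset power_divide field_simps)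
  qed
  have "card X * card (iterated_sumset m Q + uminus ` iterated_sumset n Q)
      \<le> card (X + uminus ` iterated_sumset m Q) * card (X + uminus ` iterated_sumset n Q)"
    using Ruzsa_triangle_inequality fin Q finite_iterated_sumset by blast
  then have "real (card X) * card (iterated_sumset m Q + uminus ` iterated_sumset n Q)
      \<le> (\<rho> ^ m * card X) * (\<rho> ^ n * card X)"
    by (smt (verit) iterate mult_mono of_nat_0_le_iff of_nat_mono of_nat_mult zero_le_mult_iff
        zero_le_power \<rho>_pos)
  then have "card (iterated_sumset m Q + uminus ` iterated_sumset n Q) \<le> \<rho> ^ (m + n) * card X"
    using fin by (simp add: power_add field_simps)
  also have "\<dots> \<le> L ^ (m + n) * card Q"
    using \<rho>_pos \<open>\<rho> \<le> L\<close> X Q by (intro mult_mono power_mono) (auto simp: card_mono)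
  finally show ?thesis .
qed

lemma card_sumdiff_le_if_translate_subset:
  assumes "finite Q" and translate: "\<And>a. a \<in> A \<Longrightarrow> t + a \<in> Q"
  shows "card (sumdiff m n A) \<le> card (sumdiff m n Q)"
proof -
  have "sumdiff m n A \<subseteq> (\<lambda>z. z - (real m - real n) * t) ` sumdiff m n Q"
  proof
    fix z
    assume "z \<in> sumdiff m n A"
    then obtain x y where z: "z = (\<Sum>i<m. x i) - (\<Sum>j<n. y j)"
      and "\<forall>i<m. x i \<in> A" "\<forall>j<n. y j \<in> A"
      by (auto simp: sumdiff_def)
    then have "(\<Sum>i<m. t + x i) - (\<Sum>j<n. t + y j) \<in> sumdiff m n Q"
      unfolding sumdiff_def using translate by blast
    moreover have "z = (\<Sum>i<m. t + x i) - (\<Sum>j<n. t + y j) - (real m - real n) * t"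
      by (simp add: z sum.distrib algebra_simps)
    ultimately show "z \<in> (\<lambda>z. z - (real m - real n) * t) ` sumdiff m n Q"
      by blast
  qed
  moreover have "finite (sumdiff m n Q)"
    using \<open>finite Q\<close> by (simp add: sumdiff_eq_iterated_sumset finite_iterated_sumset finite_set_plus)
  ultimately show ?thesis
    by (meson card_image_le card_mono finite_imageI le_trans)
qed

section \<open>The Balog-Szemeredi-Gowers theorem\<close>

lemma exists_ge_average:
  fixes f :: "'a \<Rightarrow> real" and t :: real
  assumes "finite S" "S \<noteq> {}" "card S * t \<le> (\<Sum>x\<in>S. f x)"
  obtains x where "x \<in> S" "t \<le> f x"
proof -
  have "\<not> (\<forall>x\<in>S. f x < t)"
  proof
    assume "\<forall>x\<in>S. f x < t"
    then have "(\<Sum>x\<in>S. f x) < card S * t"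
      using assms(1,2) by (intro sum_bounded_above_strict) (auto simp: card_gt_0_iff)
    with assms(3) show False
      by simp
  qed
  then show ?thesis
    using that by (auto simp: not_less)
qed

lemma card_mult_le_if_large_fibres:
  fixes f :: "'a \<Rightarrow> 'b" and R :: real
  assumes "finite S" and large: "\<And>d. d \<in> D \<Longrightarrow> R \<le> card {t \<in> S. f t = d}"
  shows "card D * R \<le> card S"
proof (cases "finite D")
  case True
  have "card D * R \<le> (\<Sum>d\<in>D. real (card {t \<in> S. f t = d}))"
    using large by (intro sum_bounded_below) auto
  also have "\<dots> = card (\<Union>d\<in>D. {t \<in> S. f t = d})"
    using True assms(1) by (subst card_UN_disjoint) auto
  also have "\<dots> \<le> card S"
    using assms(1) by (intro of_nat_mono card_mono) auto
  finally show ?thesis .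
qed simp

lemma card_le_twice_card_below:
  fixes f :: "'a \<Rightarrow> real" and t :: real
  assumes "finite A" "t > 0" "\<And>a. a \<in> A \<Longrightarrow> 0 \<le> f a" "(\<Sum>a\<in>A. f a) \<le> card A * t / 2"
  shows "card A \<le> 2 * card {a \<in> A. f a \<le> t}"
proof -
  have "card {a \<in> A. t < f a} * t \<le> (\<Sum>a\<in>{a \<in> A. t < f a}. f a)"
    by (intro sum_bounded_below) auto
  also have "\<dots> \<le> (\<Sum>a\<in>A. f a)"
    using assms by (intro sum_mono2) auto
  also have "\<dots> \<le> (card A / 2) * t"
    using assms(4) by simp
  finally have "card {a \<in> A. t < f a} \<le> card A / 2"
    using \<open>t > 0\<close> by (rule mult_right_le_imp_le)
  moreover have "card {a \<in> A. t < f a} + card {a \<in> A. f a \<le> t} = card A"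
  proof -
    have "A = {a \<in> A. t < f a} \<union> {a \<in> A. f a \<le> t}"
      by auto
    then show ?thesis
      using \<open>finite A\<close> by (metis (no_types, lifting) card_Un_disjoint disjoint_iff finite_Un
          mem_Collect_eq not_less)
  qed
  ultimately have "real (card A) \<le> real (2 * card {a \<in> A. f a \<le> t})"
    by linarith
  then show ?thesis
    by (simp only: of_nat_le_iff)
qed

lemma exists_subset_pairs_with_many_common_partners:
  fixes A :: "'a set" and Bad :: "('a \<times> 'a) set"
  defines "bad a \<equiv> card {b \<in> A. (a, b) \<in> Bad}"
  assumes "finite A" and few_bad: "(\<Sum>a\<in>A. real (bad a)) \<le> real (card A) ^ 2 / 8"
  obtains A' where "A' \<subseteq> A" "card A \<le> 2 * card A'"
    and "\<And>a a'. a \<in> A' \<Longrightarrow> a' \<in> A' \<Longrightarrow>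
      card A \<le> 2 * card {b \<in> A. (a, b) \<notin> Bad \<and> (a', b) \<notin> Bad}"
proof
  define A' where "A' = {a \<in> A. real (bad a) \<le> card A / 4}"
  show "A' \<subseteq> A"
    by (auto simp: A'_def)
  show "card A \<le> 2 * card A'"
  proof (cases "A = {}")
    case False
    then show ?thesis
      unfolding A'_def using \<open>finite A\<close> few_bad
      by (intro card_le_twice_card_below) (simp_all add: power2_eq_square card_gt_0_iff)
  qed simp
  show "card A \<le> 2 * card {b \<in> A. (a, b) \<notin> Bad \<and> (a', b) \<notin> Bad}" if "a \<in> A'" "a' \<in> A'" for a a'
  proof -
    let ?G = "{b \<in> A. (a, b) \<notin> Bad \<and> (a', b) \<notin> Bad}"
    let ?B = "{b \<in> A. (a, b) \<in> Bad}" and ?B' = "{b \<in> A. (a', b) \<in> Bad}"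
    have "card A \<le> card (?G \<union> ?B \<union> ?B')"
      using \<open>finite A\<close> by (intro card_mono) auto
    moreover have "card (?G \<union> ?B \<union> ?B') \<le> card (?G \<union> ?B) + card ?B'" "card (?G \<union> ?B) \<le> card ?G + card ?B"
      by (rule card_Un_le)+
    ultimately have "card A \<le> card ?G + bad a + bad a'"
      unfolding bad_def by linarith
    then have "real (card A) \<le> card ?G + bad a + bad a'"
      using of_nat_mono[where 'a=real] by fastforce
    with that have "real (card A) \<le> real (2 * card ?G)"
      by (simp add: A'_def)
    then show ?thesis
      by (simp only: of_nat_le_iff)
  qed
qed

lemma sum_card_pairs_eq_card_inter_Times:
  "finite X \<Longrightarrow> (\<Sum>a\<in>X. card {b \<in> X. (a, b) \<in> S}) = card (S \<inter> X \<times> X)"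
proof -
  assume "finite X"
  then have "(\<Sum>a\<in>X. card {b \<in> X. (a, b) \<in> S}) = card (SIGMA a:X. {b \<in> X. (a, b) \<in> S})"
    by (simp add: card_SigmaI)
  also have "(SIGMA a:X. {b \<in> X. (a, b) \<in> S}) = S \<inter> X \<times> X"
    by auto
  finally show ?thesis .
qed

locale finite_graph =
  fixes Q :: "'a set" and E :: "'a \<Rightarrow> 'a \<Rightarrow> bool"
  assumes finite_vertices: "finite Q" and symmetric: "E a b \<longleftrightarrow> E b a"
begin

definition nbr :: "'a \<Rightarrow> 'a set" where
  "nbr a = {b \<in> Q. E a b}"

definition sparse_pairs :: "real \<Rightarrow> ('a \<times> 'a) set" where
  "sparse_pairs m = {p \<in> Q \<times> Q. real (card (nbr (fst p) \<inter> nbr (snd p))) < m}"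

definition three_paths :: "'a \<Rightarrow> 'a \<Rightarrow> ('a \<times> 'a \<times> 'a) set" where
  "three_paths a a' = (SIGMA b:Q. (nbr a \<inter> nbr b) \<times> (nbr a' \<inter> nbr b))"

lemma finite_nbr [simp]: "finite (nbr a)"
  using finite_vertices by (simp add: nbr_def)

lemma sum_card_pairs_in_nbr:
  assumes "S \<subseteq> Q \<times> Q"
  shows "(\<Sum>c\<in>Q. card (S \<inter> nbr c \<times> nbr c)) = (\<Sum>p\<in>S. card (nbr (fst p) \<inter> nbr (snd p)))"
proof -
  have "finite S"
    using assms finite_vertices finite_subset by blast
  have "(\<Sum>c\<in>Q. card (S \<inter> nbr c \<times> nbr c))
      = (\<Sum>c\<in>Q. \<Sum>p\<in>S. of_bool (E c (fst p) \<and> E c (snd p)))"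
    using \<open>finite S\<close> assms by (intro sum.cong refl) (auto simp: nbr_def intro!: arg_cong[where f=card])
  also have "\<dots> = (\<Sum>p\<in>S. \<Sum>c\<in>Q. of_bool (E c (fst p) \<and> E c (snd p)))"
    by (rule sum.swap)
  also have "\<dots> = (\<Sum>p\<in>S. card (nbr (fst p) \<inter> nbr (snd p)))"
    using finite_vertices by (intro sum.cong refl) (auto simp: nbr_def symmetric intro!: arg_cong[where f=card])
  finally show ?thesis .
qed

lemma sum_card_nbr_squared_ge:
  fixes \<kappa> :: real
  assumes "Q \<noteq> {}" "\<kappa> > 0" and dense: "card Q ^ 2 / (2 * \<kappa>) \<le> (\<Sum>a\<in>Q. card (nbr a))"
  shows "real (card Q) ^ 3 / (4 * \<kappa>^2) \<le> (\<Sum>c\<in>Q. real (card (nbr c))^2)"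
proof -
  define q where "q = real (card Q)"
  have "q > 0"
    using assms(1) finite_vertices by (simp add: q_def card_gt_0_iff)
  have "(q^2 / (2 * \<kappa>))^2 \<le> (\<Sum>c\<in>Q. real (card (nbr c)))^2"
    using dense \<open>q > 0\<close> \<open>\<kappa> > 0\<close> by (intro power_mono) (auto simp: q_def)
  also have "\<dots> \<le> q * (\<Sum>c\<in>Q. real (card (nbr c))^2)"
    using Cauchy_Schwarz_ineq_sum[of "\<lambda>c. real (card (nbr c))" "\<lambda>_. 1" Q]
    by (simp add: q_def mult.commute)
  finally have "q * (q^3 / (4 * \<kappa>^2)) \<le> q * (\<Sum>c\<in>Q. real (card (nbr c))^2)"
    by (simp add: field_simps eval_nat_numeral)
  then show ?thesis
    using \<open>q > 0\<close> unfolding q_def by (rule mult_left_le_imp_le)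
qed

lemma sum_card_sparse_pairs_in_nbr_le:
  fixes m :: real
  assumes "m \<ge> 0"
  shows "(\<Sum>c\<in>Q. real (card (sparse_pairs m \<inter> nbr c \<times> nbr c))) \<le> real (card Q) ^ 2 * m"
proof -
  have "(\<Sum>c\<in>Q. real (card (sparse_pairs m \<inter> nbr c \<times> nbr c)))
      = (\<Sum>p\<in>sparse_pairs m. real (card (nbr (fst p) \<inter> nbr (snd p))))"
    using sum_card_pairs_in_nbr[of "sparse_pairs m"] by (simp add: sparse_pairs_def flip: of_nat_sum)
  also have "\<dots> \<le> card (sparse_pairs m) * m"
    by (intro sum_bounded_above) (auto simp: sparse_pairs_def less_imp_le)
  also have "\<dots> \<le> real (card Q) ^ 2 * m"
  proof (rule mult_right_mono)
    have "card (sparse_pairs m) \<le> card (Q \<times> Q)"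
      using finite_vertices by (intro card_mono) (auto simp: sparse_pairs_def)
    then show "real (card (sparse_pairs m)) \<le> real (card Q) ^ 2"
      by (simp add: card_cartesian_product power2_eq_square flip: of_nat_mult)
  qed (rule \<open>m \<ge> 0\<close>)
  finally show ?thesis .
qed

lemma exists_vertex_with_large_nbr_few_sparse_pairs:
  fixes \<kappa> :: real
  assumes "Q \<noteq> {}" "\<kappa> > 0" and dense: "card Q ^ 2 / (2 * \<kappa>) \<le> (\<Sum>a\<in>Q. card (nbr a))"
  obtains c where "c \<in> Q"
    "card Q ^ 2 / (8 * \<kappa>^2) + 8 * card (sparse_pairs (card Q / (64 * \<kappa>^2)) \<inter> nbr c \<times> nbr c)
      \<le> card (nbr c) ^ 2"
proof -
  define q where "q = real (card Q)"
  define m where "m = q / (64 * \<kappa>^2)"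
  define bad where "bad c = real (card (sparse_pairs m \<inter> nbr c \<times> nbr c))" for c
  have degrees: "q^3 / (4 * \<kappa>^2) \<le> (\<Sum>c\<in>Q. real (card (nbr c))^2)"
    unfolding q_def by (rule sum_card_nbr_squared_ge[OF assms])
  have sparse: "(\<Sum>c\<in>Q. bad c) \<le> q^2 * m"
    unfolding bad_def q_def by (rule sum_card_sparse_pairs_in_nbr_le) (use \<open>\<kappa> > 0\<close> in \<open>simp add: m_def q_def\<close>)
  have "card Q * (q^2 / (8 * \<kappa>^2)) = q^3 / (4 * \<kappa>^2) - 8 * (q^2 * m)"
    using \<open>\<kappa> > 0\<close> by (simp add: m_def q_def field_simps eval_nat_numeral)
  also have "\<dots> \<le> (\<Sum>c\<in>Q. real (card (nbr c))^2) - 8 * (\<Sum>c\<in>Q. bad c)"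
    using degrees sparse by linarith
  also have "\<dots> = (\<Sum>c\<in>Q. real (card (nbr c))^2 - 8 * bad c)"
    by (simp add: sum_subtractf sum_distrib_left)
  finally obtain c where "c \<in> Q" and c: "q^2 / (8 * \<kappa>^2) \<le> real (card (nbr c))^2 - 8 * bad c"
    using exists_ge_average[OF finite_vertices assms(1)] by blast
  show ?thesis
  proof (rule that[OF \<open>c \<in> Q\<close>])
    show "card Q ^ 2 / (8 * \<kappa>^2) + 8 * card (sparse_pairs (card Q / (64 * \<kappa>^2)) \<inter> nbr c \<times> nbr c)
      \<le> card (nbr c) ^ 2"
      using c by (simp add: q_def m_def bad_def; linarith)
  qed
qed

lemma card_three_paths_ge:
  fixes m :: real
  assumes "a \<in> Q" "a' \<in> Q" "W \<subseteq> Q" "m \<ge> 0"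
    and dense: "\<And>b. b \<in> W \<Longrightarrow> (a, b) \<notin> sparse_pairs m \<and> (a', b) \<notin> sparse_pairs m"
  shows "card W * m^2 \<le> card (three_paths a a')"
proof -
  have "finite W"
    using assms(3) finite_vertices finite_subset by blast
  have "m \<le> card (nbr a \<inter> nbr b) \<and> m \<le> card (nbr a' \<inter> nbr b)" if "b \<in> W" for b
    using dense[OF that] assms(1-3) that by (auto simp: sparse_pairs_def not_less)
  then have "card W * m^2 \<le> (\<Sum>b\<in>W. real (card (nbr a \<inter> nbr b)) * card (nbr a' \<inter> nbr b))"
    using \<open>m \<ge> 0\<close> by (intro sum_bounded_below) (auto simp: power2_eq_square intro!: mult_mono)
  also have "\<dots> = card (SIGMA b:W. (nbr a \<inter> nbr b) \<times> (nbr a' \<inter> nbr b))"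
    using \<open>finite W\<close> by (simp add: card_SigmaI card_cartesian_product)
  also have "\<dots> \<le> card (three_paths a a')"
    unfolding three_paths_def using finite_vertices assms(3)
    by (intro of_nat_mono card_mono) auto
  finally show ?thesis .
qed

text \<open>
  The neighbourhood of a suitable vertex contains few pairs with a small common neighbourhood;
  discarding the vertices lying in many such pairs leaves a set in which any two vertices are
  joined by many paths of length three.
\<close>

lemma exists_subset_with_many_three_paths:
  fixes \<kappa> :: real
  assumes "Q \<noteq> {}" "\<kappa> > 0" and dense: "card Q ^ 2 / (2 * \<kappa>) \<le> (\<Sum>a\<in>Q. card (nbr a))"
  obtains A where "A \<subseteq> Q" "A \<noteq> {}" "card Q ^ 2 \<le> 32 * \<kappa>^2 * card A ^ 2"
    and "\<And>a a'. a \<in> A \<Longrightarrow> a' \<in> A \<Longrightarrow>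
      card A * (card Q / (64 * \<kappa>^2))^2 / 2 \<le> card (three_paths a a')"
proof -
  define m where "m = card Q / (64 * \<kappa>^2)"
  obtain c where "c \<in> Q"
    and c: "card Q ^ 2 / (8 * \<kappa>^2) + 8 * card (sparse_pairs m \<inter> nbr c \<times> nbr c) \<le> card (nbr c) ^ 2"
    using exists_vertex_with_large_nbr_few_sparse_pairs[OF assms] unfolding m_def by blast
  define \<alpha> where "\<alpha> = real (card (nbr c))"
  have c': "real (card Q) ^ 2 / (8 * \<kappa>^2) + 8 * real (card (sparse_pairs m \<inter> nbr c \<times> nbr c)) \<le> \<alpha>^2"
    using c unfolding \<alpha>_def by simp
  have "0 \<le> real (card Q) ^ 2 / (8 * \<kappa>^2)"
    by simp
  with c' have "8 * real (card (sparse_pairs m \<inter> nbr c \<times> nbr c)) \<le> \<alpha>^2"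
    by linarith
  then have few_sparse: "(\<Sum>a\<in>nbr c. real (card {b \<in> nbr c. (a, b) \<in> sparse_pairs m})) \<le> \<alpha>^2 / 8"
    unfolding of_nat_sum[symmetric] sum_card_pairs_eq_card_inter_Times[OF finite_nbr] by simp
  obtain A where "A \<subseteq> nbr c" and "card (nbr c) \<le> 2 * card A"
    and common: "\<And>a a'. a \<in> A \<Longrightarrow> a' \<in> A \<Longrightarrow>
      card (nbr c) \<le> 2 * card {b \<in> nbr c. (a, b) \<notin> sparse_pairs m \<and> (a', b) \<notin> sparse_pairs m}"
    using exists_subset_pairs_with_many_common_partners[OF finite_nbr few_sparse[unfolded \<alpha>_def]] by blast
  have "A \<subseteq> Q"
    using \<open>A \<subseteq> nbr c\<close> by (auto simp: nbr_def)
  then have "finite A"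
    using finite_vertices finite_subset by blast
  have "card A \<le> \<alpha>"
    using \<open>A \<subseteq> nbr c\<close> by (simp add: \<alpha>_def card_mono)
  have "real (card Q) ^ 2 / (8 * \<kappa>^2) \<le> \<alpha>^2"
    using c' by simp
  then have "card Q ^ 2 \<le> 8 * \<kappa>^2 * \<alpha>^2"
    using \<open>\<kappa> > 0\<close> by (simp add: field_simps)
  also have "\<dots> \<le> 8 * \<kappa>^2 * (2 * real (card A))^2"
  proof (intro mult_left_mono power_mono)
    show "\<alpha> \<le> 2 * real (card A)"
      using of_nat_mono[where 'a=real, OF \<open>card (nbr c) \<le> 2 * card A\<close>] by (simp add: \<alpha>_def)
  qed (simp_all add: \<alpha>_def)
  also have "\<dots> = 32 * \<kappa>^2 * card A ^ 2"
    by (simp add: power_mult_distrib)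
  finally have "card Q ^ 2 \<le> 32 * \<kappa>^2 * card A ^ 2" .
  moreover from this have "A \<noteq> {}"
    using assms(1) finite_vertices \<open>\<kappa> > 0\<close> by auto
  moreover have "card A * m^2 / 2 \<le> card (three_paths a a')" if "a \<in> A" "a' \<in> A" for a a'
  proof -
    define W where "W = {b \<in> nbr c. (a, b) \<notin> sparse_pairs m \<and> (a', b) \<notin> sparse_pairs m}"
    have "real (card A) \<le> 2 * card W"
      using of_nat_mono[where 'a=real, OF common[OF that]] \<open>card A \<le> \<alpha>\<close> by (simp add: W_def \<alpha>_def)
    then have "card A * m^2 \<le> (2 * card W) * m^2"
      by (intro mult_right_mono) auto
    then have "card A * m^2 / 2 \<le> card W * m^2"
      by linarith
    also have "\<dots> \<le> card (three_paths a a')"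
      using that \<open>A \<subseteq> Q\<close> \<open>\<kappa> > 0\<close>
      by (intro card_three_paths_ge) (auto simp: W_def nbr_def m_def)
    finally show ?thesis .
  qed
  ultimately show ?thesis
    using that \<open>A \<subseteq> Q\<close> unfolding m_def by blast
qed

end

lemma sum_card_nbr_eq_sum_card_representations:
  fixes Q P :: "'a::ab_group_add set"
  assumes "finite Q" "finite P"
  shows "(\<Sum>a\<in>Q. card {b \<in> Q. a + b \<in> P}) = (\<Sum>y\<in>P. card {x \<in> Q. y - x \<in> Q})"
proof -
  have "(\<Sum>a\<in>Q. card {b \<in> Q. a + b \<in> P}) = card (SIGMA a:Q. {b \<in> Q. a + b \<in> P})"
    using assms by (simp add: card_SigmaI)
  also have "\<dots> = card (SIGMA y:P. {x \<in> Q. y - x \<in> Q})"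
    by (intro bij_betw_same_card[where f="\<lambda>(a, b). (a + b, a)"]
        bij_betw_byWitness[where f'="\<lambda>(y, x). (x, y - x)"]) auto
  also have "\<dots> = (\<Sum>y\<in>P. card {x \<in> Q. y - x \<in> Q})"
    using assms by (simp add: card_SigmaI)
  finally show ?thesis .
qed

lemma sum_card_representations_le:
  fixes Q Y :: "'a::ab_group_add set"
  assumes "finite Q" "finite Y"
  shows "(\<Sum>y\<in>Y. card {x \<in> Q. y - x \<in> Q}) \<le> card Q ^ 2"
proof -
  have "(\<Sum>y\<in>Y. card {x \<in> Q. y - x \<in> Q}) = (\<Sum>a\<in>Q. card {b \<in> Q. a + b \<in> Y})"
    using sum_card_nbr_eq_sum_card_representations[OF assms] by simp
  also have "\<dots> \<le> (\<Sum>a\<in>Q. card Q)"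
    using assms by (intro sum_mono card_mono) auto
  finally show ?thesis
    by (simp add: power2_eq_square)
qed

lemma card_pairs_with_sum:
  fixes Q :: "'a::ab_group_add set"
  shows "card {p \<in> Q \<times> Q. fst p + snd p = y} = card {x \<in> Q. y - x \<in> Q}"
  by (intro bij_betw_same_card[where f=fst] bij_betw_byWitness[where f'="\<lambda>x. (x, y - x)"])
    (auto simp: algebra_simps)

lemma sum_over_popular_ge:
  fixes \<rho> :: "'a \<Rightarrow> real"
  assumes "finite Y" "q > 0" "\<kappa> > 0" and \<rho>: "\<And>y. 0 \<le> \<rho> y" "\<And>y. \<rho> y \<le> q"
    and mass: "(\<Sum>y\<in>Y. \<rho> y) \<le> q^2" and energy: "q^3 / \<kappa> \<le> (\<Sum>y\<in>Y. \<rho> y ^ 2)"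
  shows "q^2 / (2 * \<kappa>) \<le> (\<Sum>y\<in>{y \<in> Y. q / (2 * \<kappa>) \<le> \<rho> y}. \<rho> y)"
proof -
  define P where "P = {y \<in> Y. q / (2 * \<kappa>) \<le> \<rho> y}"
  have "(\<Sum>y\<in>Y - P. \<rho> y ^ 2) \<le> (\<Sum>y\<in>Y - P. q / (2 * \<kappa>) * \<rho> y)"
  proof (rule sum_mono)
    fix y
    assume "y \<in> Y - P"
    then have "\<rho> y \<le> q / (2 * \<kappa>)"
      by (auto simp: P_def)
    from mult_right_mono[OF this \<rho>(1)[of y]] show "\<rho> y ^ 2 \<le> q / (2 * \<kappa>) * \<rho> y"
      by (simp only: power2_eq_square)
  qed
  also have "\<dots> = q / (2 * \<kappa>) * (\<Sum>y\<in>Y - P. \<rho> y)"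
    by (simp add: sum_distrib_left)
  also have "\<dots> \<le> q / (2 * \<kappa>) * (\<Sum>y\<in>Y. \<rho> y)"
    using assms \<rho>(1) by (intro mult_left_mono sum_mono2) auto
  also have "\<dots> \<le> q / (2 * \<kappa>) * q^2"
    using assms mass by (intro mult_left_mono) auto
  finally have small: "(\<Sum>y\<in>Y - P. \<rho> y ^ 2) \<le> q^3 / (2 * \<kappa>)"
    by (simp add: power2_eq_square power3_eq_cube)
  have "(\<Sum>y\<in>P. \<rho> y ^ 2) \<le> (\<Sum>y\<in>P. q * \<rho> y)"
    using \<rho> by (intro sum_mono) (simp add: power2_eq_square mult_right_mono)
  then have large: "(\<Sum>y\<in>P. \<rho> y ^ 2) \<le> q * (\<Sum>y\<in>P. \<rho> y)"
    by (simp add: sum_distrib_left)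
  have "(\<Sum>y\<in>Y. \<rho> y ^ 2) = (\<Sum>y\<in>Y - P. \<rho> y ^ 2) + (\<Sum>y\<in>P. \<rho> y ^ 2)"
    using \<open>finite Y\<close> by (intro sum.subset_diff) (auto simp: P_def)
  with energy small large have "q^3 / \<kappa> - q^3 / (2 * \<kappa>) \<le> q * (\<Sum>y\<in>P. \<rho> y)"
    by linarith
  moreover have "q^3 / \<kappa> - q^3 / (2 * \<kappa>) = q * (q^2 / (2 * \<kappa>))"
    using \<open>\<kappa> > 0\<close> by (simp add: field_simps power2_eq_square power3_eq_cube)
  ultimately have "q * (q^2 / (2 * \<kappa>)) \<le> q * (\<Sum>y\<in>P. \<rho> y)"
    by simp
  from this \<open>q > 0\<close> have "q^2 / (2 * \<kappa>) \<le> (\<Sum>y\<in>P. \<rho> y)"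
    by (rule mult_left_le_imp_le)
  then show ?thesis
    by (simp add: P_def)
qed

text \<open>
  A path \<open>a - c\<^sub>1 - b - c\<^sub>2 - a'\<close> whose four edges are popular sums gives the identity
  \<open>a - a' = (a + c\<^sub>1) - (b + c\<^sub>1) + (b + c\<^sub>2) - (a' + c\<^sub>2)\<close>, and representing each of the four sums
  as a sum of two elements of \<open>Q\<close> independently yields many representations of \<open>a - a'\<close>.
\<close>

lemma card_representations_ge_three_paths:
  fixes Q P :: "'a::ab_group_add set" and r :: real
  defines "pairs y \<equiv> {p \<in> Q \<times> Q. fst p + snd p = y}"
  defines "alt_sum \<equiv> \<lambda>(p1, p2, p3, p4). (fst p1 + snd p1) - (fst p2 + snd p2) + (fst p3 + snd p3) - (fst p4 + snd p4)"
  assumes "finite Q" "r \<ge> 0" and popular: "\<And>y. y \<in> P \<Longrightarrow> r \<le> card (pairs y)"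
  shows "card (finite_graph.three_paths Q (\<lambda>a b. a + b \<in> P) a a') * r ^ 4
    \<le> card {t \<in> (Q \<times> Q) \<times> (Q \<times> Q) \<times> (Q \<times> Q) \<times> (Q \<times> Q). alt_sum t = a - a'}"
proof -
  interpret finite_graph Q "\<lambda>a b. a + b \<in> P"
    using \<open>finite Q\<close> by unfold_locales (simp_all add: add.commute)
  define piece where "piece = (\<lambda>(b, c1, c2). pairs (a + c1) \<times> pairs (b + c1) \<times> pairs (b + c2) \<times> pairs (a' + c2))"
  have finite_pairs: "finite (pairs y)" for y
    using \<open>finite Q\<close> by (simp add: pairs_def)
  have "card (three_paths a a') * r ^ 4 \<le> (\<Sum>t\<in>three_paths a a'. real (card (piece t)))"
  proof (intro sum_bounded_below[of _ "r ^ 4", simplified mult.commute])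
    fix t assume "t \<in> three_paths a a'"
    then obtain b c1 c2 where t: "t = (b, c1, c2)" "a + c1 \<in> P" "b + c1 \<in> P" "b + c2 \<in> P" "a' + c2 \<in> P"
      by (auto simp: three_paths_def nbr_def add.commute)
    then have "r * r * r * r \<le> real (card (pairs (a + c1))) * real (card (pairs (b + c1)))
        * real (card (pairs (b + c2))) * real (card (pairs (a' + c2)))"
      using popular \<open>r \<ge> 0\<close> by (intro mult_mono) auto
    then show "r ^ 4 \<le> real (card (piece t))"
      by (simp add: t piece_def card_cartesian_product power4_eq_xxxx mult.assoc)
  qed
  also have "\<dots> = card (\<Union>t\<in>three_paths a a'. piece t)"
  proof -
    have "finite (three_paths a a')"
      using finite_vertices by (simp add: three_paths_def)
    moreover have "piece t \<inter> piece t' = {}" if "t \<noteq> t'" for t t'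
      using that by (auto simp: piece_def pairs_def split: prod.splits)
    ultimately show ?thesis
      by (subst card_UN_disjoint) (auto simp: piece_def finite_pairs split: prod.splits)
  qed
  also have "\<dots> \<le> card {t \<in> (Q \<times> Q) \<times> (Q \<times> Q) \<times> (Q \<times> Q) \<times> (Q \<times> Q). alt_sum t = a - a'}"
    using \<open>finite Q\<close> by (intro of_nat_mono card_mono) (auto simp: three_paths_def piece_def pairs_def alt_sum_def)
  finally show ?thesis .
qed

lemma card_diff_set_mult_le_three_paths:
  fixes Q P A :: "'a::ab_group_add set" and L r :: real
  assumes "finite Q" "r \<ge> 0" and popular: "\<And>y. y \<in> P \<Longrightarrow> r \<le> card {x \<in> Q. y - x \<in> Q}"
    and paths: "\<And>a a'. a \<in> A \<Longrightarrow> a' \<in> A \<Longrightarrow>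
      L \<le> card (finite_graph.three_paths Q (\<lambda>a b. a + b \<in> P) a a')"
  shows "card (A + uminus ` A) * (L * r ^ 4) \<le> real (card Q) ^ 8"
proof -
  have "card (A + uminus ` A) * (L * r ^ 4) \<le> card ((Q \<times> Q) \<times> (Q \<times> Q) \<times> (Q \<times> Q) \<times> (Q \<times> Q))"
  proof (rule card_mult_le_if_large_fibres)
    fix d
    assume "d \<in> A + uminus ` A"
    then obtain a a' where "a \<in> A" "a' \<in> A" "d = a - a'"
      by (auto elim!: set_plus_elim)
    have "L * r ^ 4 \<le> card (finite_graph.three_paths Q (\<lambda>a b. a + b \<in> P) a a') * r ^ 4"
      using paths[OF \<open>a \<in> A\<close> \<open>a' \<in> A\<close>] \<open>r \<ge> 0\<close> by (intro mult_right_mono) auto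
    also have "\<dots> \<le> card {t \<in> (Q \<times> Q) \<times> (Q \<times> Q) \<times> (Q \<times> Q) \<times> (Q \<times> Q).
        (\<lambda>(p1, p2, p3, p4). (fst p1 + snd p1) - (fst p2 + snd p2) + (fst p3 + snd p3) - (fst p4 + snd p4)) t = d}"
      unfolding \<open>d = a - a'\<close> using assms
      by (intro card_representations_ge_three_paths) (auto simp: card_pairs_with_sum)
    finally show "L * r ^ 4 \<le> \<dots>" .
  qed (use assms(1) in simp)
  then show ?thesis
    by (simp add: card_cartesian_product eval_nat_numeral)
qed

theorem Balog_Szemeredi_Gowers:
  fixes Q Y :: "'a::ab_group_add set" and \<kappa> :: real
  assumes Q: "finite Q" "Q \<noteq> {}" and "finite Y" "\<kappa> > 0"
    and energy: "card Q ^ 3 / \<kappa> \<le> (\<Sum>y\<in>Y. real (card {x \<in> Q. y - x \<in> Q}) ^ 2)"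
  obtains A where "A \<subseteq> Q" "A \<noteq> {}" "card Q ^ 2 \<le> 32 * \<kappa>^2 * card A ^ 2"
    and "card (A + uminus ` A) \<le> 2^22 * \<kappa>^10 * card A"
proof -
  define q where "q = real (card Q)"
  define \<rho> where "\<rho> y = real (card {x \<in> Q. y - x \<in> Q})" for y
  define P where "P = {y \<in> Y. q / (2 * \<kappa>) \<le> \<rho> y}"
  interpret finite_graph Q "\<lambda>a b. a + b \<in> P"
    using Q by unfold_locales (simp_all add: add.commute)
  have "q > 0"
    using Q by (simp add: q_def card_gt_0_iff)
  have "finite P"
    using \<open>finite Y\<close> by (simp add: P_def)
  have "q^2 / (2 * \<kappa>) \<le> (\<Sum>y\<in>P. \<rho> y)"
    unfolding P_def
  proof (rule sum_over_popular_ge)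
    show "\<rho> y \<le> q" for y
      using Q by (auto simp: \<rho>_def q_def intro!: card_mono)
    show "(\<Sum>y\<in>Y. \<rho> y) \<le> q^2"
      using sum_card_representations_le[OF Q(1) \<open>finite Y\<close>] by (simp add: \<rho>_def q_def flip: of_nat_sum)
  qed (use assms \<open>q > 0\<close> in \<open>auto simp: \<rho>_def q_def\<close>)
  also have "\<dots> = (\<Sum>a\<in>Q. card (nbr a))"
    using sum_card_nbr_eq_sum_card_representations[OF Q(1) \<open>finite P\<close>]
    by (simp add: \<rho>_def nbr_def flip: of_nat_sum)
  finally have dense: "card Q ^ 2 / (2 * \<kappa>) \<le> (\<Sum>a\<in>Q. card (nbr a))"
    by (simp add: q_def)
  obtain A where A: "A \<subseteq> Q" "A \<noteq> {}" "card Q ^ 2 \<le> 32 * \<kappa>^2 * card A ^ 2"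
    and paths: "\<And>a a'. a \<in> A \<Longrightarrow> a' \<in> A \<Longrightarrow>
      card A * (card Q / (64 * \<kappa>^2))^2 / 2 \<le> card (three_paths a a')"
    by (rule exists_subset_with_many_three_paths[OF Q(2) \<open>\<kappa> > 0\<close> dense]) auto
  define R where "R = card A * (q / (64 * \<kappa>^2))^2 / 2 * (q / (2 * \<kappa>))^4"
  have "card (A + uminus ` A) * R \<le> q ^ 8"
    unfolding R_def q_def
    by (rule card_diff_set_mult_le_three_paths[OF Q(1) _ _ paths]) (use \<open>\<kappa> > 0\<close> in \<open>auto simp: P_def \<rho>_def q_def\<close>)
  moreover have "R > 0"
    using A \<open>q > 0\<close> \<open>\<kappa> > 0\<close> finite_subset[OF A(1) Q(1)] by (simp add: R_def card_gt_0_iff)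
  ultimately have "card (A + uminus ` A) \<le> q ^ 8 / R"
    by (simp add: field_simps)
  also have "q ^ 8 / R = 2^17 * \<kappa>^8 * q^2 / card A"
    using \<open>q > 0\<close> \<open>\<kappa> > 0\<close> by (simp add: R_def field_simps eval_nat_numeral)
  also have "\<dots> \<le> 2^17 * \<kappa>^8 * (32 * \<kappa>^2 * card A ^ 2) / card A"
    using A(3) \<open>\<kappa> > 0\<close> by (intro divide_right_mono mult_left_mono) (auto simp: q_def)
  also have "\<dots> = 2^22 * \<kappa>^10 * card A"
    using A finite_subset[OF A(1) Q(1)] by (simp add: power2_eq_square eval_nat_numeral field_simps)
  finally show ?thesis
    using that A unfolding q_def by blast
qed

section \<open>A weighted Balog-Szemeredi-Gowers theorem\<close>

lemma sum_comp_inj_le: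
  fixes \<phi> :: "'a \<Rightarrow> real"
  assumes "finite V" "finite W" "inj h" and \<phi>: "\<And>x. 0 \<le> \<phi> x" "\<And>x. x \<notin> V \<Longrightarrow> \<phi> x = 0"
  shows "(\<Sum>x\<in>W. \<phi> (h x)) \<le> (\<Sum>x\<in>V. \<phi> x)"
proof -
  have "(\<Sum>x\<in>W. \<phi> (h x)) = (\<Sum>z\<in>h ` W. \<phi> z)"
    using \<open>inj h\<close> by (simp add: sum.reindex inj_on_def)
  also have "\<dots> = (\<Sum>z\<in>h ` W \<inter> V. \<phi> z)"
    using assms by (intro sum.mono_neutral_right) auto
  also have "\<dots> \<le> (\<Sum>z\<in>V. \<phi> z)"
    using assms by (intro sum_mono2) auto
  finally show ?thesis .
qed

definition conv :: "'a::ab_group_add set \<Rightarrow> ('a \<Rightarrow> real) \<Rightarrow> ('a \<Rightarrow> real) \<Rightarrow> 'a \<Rightarrow> real" where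
  "conv V f g y = (\<Sum>x\<in>V. f x * g (y - x))"

definition weighted_energy :: "'a::ab_group_add set \<Rightarrow> 'a set \<Rightarrow> ('a \<Rightarrow> real) \<Rightarrow> real" where
  "weighted_energy V Y f = (\<Sum>y\<in>Y. conv V f f y ^ 2)"

lemma inj_diff_left: "inj (\<lambda>x::'a::ab_group_add. y - x)"
  by (rule injI) simp

lemma inj_diff_right: "inj (\<lambda>y::'a::ab_group_add. y - x)"
  by (rule injI) simp

lemma conv_nonneg: "(\<And>x. 0 \<le> f x) \<Longrightarrow> (\<And>x. 0 \<le> g x) \<Longrightarrow> 0 \<le> conv V f g y"
  by (simp add: conv_def sum_nonneg)

lemma conv_commute:
  fixes f g :: "'a::ab_group_add \<Rightarrow> real"
  assumes "finite V" "\<And>x. x \<notin> V \<Longrightarrow> f x = 0" "\<And>x. x \<notin> V \<Longrightarrow> g x = 0"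
  shows "conv V f g y = conv V g f y"
proof -
  define S where "S = {x \<in> V. y - x \<in> V}"
  have restrict: "conv V h1 h2 y = (\<Sum>x\<in>S. h1 x * h2 (y - x))"
    if "\<And>x. x \<notin> V \<Longrightarrow> h2 x = 0" for h1 h2 :: "'a \<Rightarrow> real"
    unfolding conv_def using \<open>finite V\<close> that by (intro sum.mono_neutral_right) (auto simp: S_def)
  have "(\<Sum>x\<in>S. f x * g (y - x)) = (\<Sum>x\<in>S. g x * f (y - x))"
    by (rule sum.reindex_bij_witness[of S "\<lambda>x. y - x" "\<lambda>x. y - x"]) (auto simp: S_def mult.commute)
  with restrict[of g f] restrict[of f g] assms show ?thesis
    by simp
qed

lemma conv_le_sum_squares:
  assumes "finite V" and r: "\<And>x. 0 \<le> r x" "\<And>x. x \<notin> V \<Longrightarrow> r x = 0"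
    and f: "\<And>x. 0 \<le> f x" "\<And>x. f x \<le> r x" and g: "\<And>x. 0 \<le> g x" "\<And>x. g x \<le> r x"
  shows "conv V f g y \<le> (\<Sum>x\<in>V. r x ^ 2)"
proof -
  have "conv V f g y \<le> (\<Sum>x\<in>V. (r x ^ 2 + r (y - x) ^ 2) / 2)"
    unfolding conv_def
  proof (rule sum_mono)
    fix x
    have "f x * g (y - x) \<le> r x * r (y - x)"
      using f g r by (intro mult_mono) auto
    also have "\<dots> \<le> (r x ^ 2 + r (y - x) ^ 2) / 2"
      using sum_squares_bound[of "r x" "r (y - x)"] by simp
    finally show "f x * g (y - x) \<le> (r x ^ 2 + r (y - x) ^ 2) / 2" .
  qed
  also have "\<dots> = ((\<Sum>x\<in>V. r x ^ 2) + (\<Sum>x\<in>V. r (y - x) ^ 2)) / 2"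
    by (simp add: sum.distrib flip: sum_divide_distrib)
  also have "(\<Sum>x\<in>V. r (y - x) ^ 2) \<le> (\<Sum>x\<in>V. r x ^ 2)"
    using assms inj_diff_left by (intro sum_comp_inj_le[where \<phi>="\<lambda>x. r x ^ 2"]) auto
  finally show ?thesis
    by simp
qed

lemma sum_conv_le:
  assumes "finite V" "finite Y" and f: "\<And>x. 0 \<le> f x"
    and g: "\<And>x. 0 \<le> g x" "\<And>x. x \<notin> V \<Longrightarrow> g x = 0"
  shows "(\<Sum>y\<in>Y. conv V f g y) \<le> (\<Sum>x\<in>V. f x) * (\<Sum>x\<in>V. g x)"
proof -
  have "(\<Sum>y\<in>Y. conv V f g y) = (\<Sum>x\<in>V. f x * (\<Sum>y\<in>Y. g (y - x)))"
    unfolding conv_def by (simp add: sum.swap[of _ Y] sum_distrib_left)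
  also have "\<dots> \<le> (\<Sum>x\<in>V. f x * (\<Sum>z\<in>V. g z))"
    using assms inj_diff_right by (intro sum_mono mult_left_mono sum_comp_inj_le) auto
  finally show ?thesis
    by (simp add: sum_distrib_right)
qed

lemma weighted_energy_le:
  assumes "finite V" "finite Y" and r: "\<And>x. 0 \<le> r x" "\<And>x. x \<notin> V \<Longrightarrow> r x = 0"
    and f: "\<And>x. 0 \<le> f x" "\<And>x. f x \<le> r x"
  shows "weighted_energy V Y f \<le> (\<Sum>x\<in>V. r x ^ 2) * (\<Sum>x\<in>V. f x) ^ 2"
proof -
  have f_supp: "f x = 0" if "x \<notin> V" for x
    using f r that by (metis order_antisym)
  have "weighted_energy V Y f \<le> (\<Sum>y\<in>Y. (\<Sum>x\<in>V. r x ^ 2) * conv V f f y)"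
    unfolding weighted_energy_def
  proof (rule sum_mono)
    fix y
    have "conv V f f y \<le> (\<Sum>x\<in>V. r x ^ 2)"
      by (rule conv_le_sum_squares) (use assms in auto)
    moreover have "0 \<le> conv V f f y"
      by (rule conv_nonneg) (use f in auto)
    ultimately show "conv V f f y ^ 2 \<le> (\<Sum>x\<in>V. r x ^ 2) * conv V f f y"
      by (simp add: power2_eq_square mult_right_mono)
  qed
  also have "\<dots> \<le> (\<Sum>x\<in>V. r x ^ 2) * ((\<Sum>x\<in>V. f x) * (\<Sum>x\<in>V. f x))"
    using sum_conv_le[OF assms(1,2) f(1) f(1) f_supp]
    by (simp add: sum_distrib_left[symmetric] mult_left_mono sum_nonneg)
  finally show ?thesis
    by (simp add: power2_eq_square)
qed

lemma weighted_energy_diff_le: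
  assumes "finite V" and r: "\<And>x. 0 \<le> r x" "\<And>x. x \<notin> V \<Longrightarrow> r x = 0"
    and f: "\<And>x. 0 \<le> f x" "\<And>x. f x \<le> r x"
  shows "weighted_energy V Y r - weighted_energy V Y f
    \<le> 4 * (\<Sum>y\<in>Y. conv V r r y * conv V (\<lambda>x. r x - f x) r y)"
proof -
  define d where "d x = r x - f x" for x
  have d: "0 \<le> d x" "d x \<le> r x" "x \<notin> V \<Longrightarrow> d x = 0" for x
    using r f by (auto simp: d_def) (metis order_antisym)
  have pointwise: "conv V r r y ^ 2 - conv V f f y ^ 2 \<le> 4 * (conv V r r y * conv V d r y)" for y
  proof -
    have "conv V r r y - conv V f f y = conv V d r y + conv V f d y"
      unfolding conv_def d_def by (simp add: algebra_simps sum.distrib[symmetric] sum_subtractf[symmetric])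
    also have "conv V f d y \<le> conv V r d y"
      unfolding conv_def using f d by (intro sum_mono mult_right_mono) auto
    also have "conv V r d y = conv V d r y"
      using assms d by (intro conv_commute) auto
    finally have "conv V r r y - conv V f f y \<le> 2 * conv V d r y"
      by simp
    moreover have "conv V f f y \<le> conv V r r y" "0 \<le> conv V f f y"
      unfolding conv_def using f r by (auto intro!: sum_mono mult_mono sum_nonneg)
    ultimately have "(conv V r r y - conv V f f y) * (conv V r r y + conv V f f y)
        \<le> (2 * conv V d r y) * (2 * conv V r r y)"
      using conv_nonneg[OF d(1) r(1)] by (intro mult_mono) auto
    then show ?thesis
      by (simp add: power2_eq_square algebra_simps)
  qed
  show ?thesis
    unfolding weighted_energy_def sum_subtractf[symmetric] sum_distrib_left d_def[symmetric]
    by (intro sum_mono pointwise)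
qed

lemma sum_conv_mult_shift_le:
  assumes "finite V" "finite Y" and r: "\<And>x. 0 \<le> r x" "\<And>x. x \<notin> V \<Longrightarrow> r x = 0"
  defines "M \<equiv> \<Sum>x\<in>V. r x" and "e \<equiv> \<Sum>x\<in>V. r x ^ 2"
  shows "(\<Sum>y\<in>Y. conv V r r y * r (y - x)) \<le> e * M"
    and "(\<Sum>x\<in>V. \<Sum>y\<in>Y. conv V r r y * r (y - x)) \<le> M ^ 3"
proof -
  have c: "0 \<le> conv V r r y" "conv V r r y \<le> e" for y
    using conv_nonneg[OF r(1) r(1)] conv_le_sum_squares[OF assms(1) r r(1) order_refl r(1) order_refl]
    by (auto simp: e_def)
  have "0 \<le> e" "0 \<le> M"
    using r by (simp_all add: e_def M_def sum_nonneg)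
  have "(\<Sum>y\<in>Y. conv V r r y * r (y - x)) \<le> (\<Sum>y\<in>Y. e * r (y - x))"
    using c r by (intro sum_mono mult_right_mono) auto
  also have "\<dots> = e * (\<Sum>y\<in>Y. r (y - x))"
    by (simp add: sum_distrib_left)
  also have "\<dots> \<le> e * M"
    unfolding M_def using assms inj_diff_right \<open>0 \<le> e\<close> by (intro mult_left_mono sum_comp_inj_le) auto
  finally show "(\<Sum>y\<in>Y. conv V r r y * r (y - x)) \<le> e * M" .
  have "(\<Sum>x\<in>V. \<Sum>y\<in>Y. conv V r r y * r (y - x)) = (\<Sum>y\<in>Y. conv V r r y * (\<Sum>x\<in>V. r (y - x)))"
    by (simp add: sum.swap[of _ V] sum_distrib_left)
  also have "\<dots> \<le> (\<Sum>y\<in>Y. conv V r r y * M)"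
    unfolding M_def using assms c inj_diff_left by (intro sum_mono mult_left_mono sum_comp_inj_le) auto
  also have "\<dots> = M * (\<Sum>y\<in>Y. conv V r r y)"
    by (simp add: sum_distrib_left mult.commute)
  also have "\<dots> \<le> M * M^2"
  proof (rule mult_left_mono)
    show "(\<Sum>y\<in>Y. conv V r r y) \<le> M^2"
      unfolding M_def power2_eq_square by (rule sum_conv_le) (use assms in auto)
  qed (rule \<open>0 \<le> M\<close>)
  finally show "(\<Sum>x\<in>V. \<Sum>y\<in>Y. conv V r r y * r (y - x)) \<le> M ^ 3"
    by (simp add: power3_eq_cube power2_eq_square)
qed

lemma sum_conv_mult_conv_le:
  assumes "finite V" "finite Y" and r: "\<And>x. 0 \<le> r x" "\<And>x. x \<notin> V \<Longrightarrow> r x = 0"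
    and "\<theta> \<ge> 0" "\<Lambda> > 0" and d: "\<And>x. 0 \<le> d x" "\<And>x. d x \<le> \<theta> \<or> d x \<le> r x ^ 2 / \<Lambda>"
  defines "M \<equiv> \<Sum>x\<in>V. r x" and "e \<equiv> \<Sum>x\<in>V. r x ^ 2"
  shows "(\<Sum>y\<in>Y. conv V r r y * conv V d r y) \<le> \<theta> * M^3 + e^2 * M / \<Lambda>"
proof -
  define F where "F x = (\<Sum>y\<in>Y. conv V r r y * r (y - x))" for x
  have "0 \<le> e" "0 \<le> M"
    using r by (simp_all add: e_def M_def sum_nonneg)
  have F: "0 \<le> F x" "F x \<le> e * M" for x
  proof -
    show "0 \<le> F x"
      unfolding F_def using r by (intro sum_nonneg mult_nonneg_nonneg conv_nonneg) auto
    show "F x \<le> e * M"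
      unfolding F_def M_def e_def by (rule sum_conv_mult_shift_le(1)) (use assms in auto)
  qed
  have "(\<Sum>x\<in>V. F x) \<le> M ^ 3"
    unfolding F_def M_def by (rule sum_conv_mult_shift_le(2)) (use assms in auto)
  have "(\<Sum>y\<in>Y. conv V r r y * conv V d r y) = (\<Sum>y\<in>Y. \<Sum>x\<in>V. d x * (conv V r r y * r (y - x)))"
    unfolding conv_def[of V d r] by (simp add: sum_distrib_left mult_ac)
  also have "\<dots> = (\<Sum>x\<in>V. d x * F x)"
    unfolding F_def by (subst sum.swap) (simp add: sum_distrib_left)
  also have "\<dots> \<le> (\<Sum>x\<in>V. \<theta> * F x + r x ^ 2 / \<Lambda> * (e * M))"
  proof (rule sum_mono)
    fix x
    have nonneg: "0 \<le> \<theta> * F x" "0 \<le> r x ^ 2 / \<Lambda> * (e * M)"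
      using F[of x] \<open>\<theta> \<ge> 0\<close> \<open>\<Lambda> > 0\<close> \<open>0 \<le> e\<close> \<open>0 \<le> M\<close> by auto
    from d(2)[of x] show "d x * F x \<le> \<theta> * F x + r x ^ 2 / \<Lambda> * (e * M)"
    proof
      assume "d x \<le> \<theta>"
      then have "d x * F x \<le> \<theta> * F x"
        using F[of x] by (intro mult_right_mono) auto
      with nonneg show ?thesis
        by linarith
    next
      assume "d x \<le> r x ^ 2 / \<Lambda>"
      then have "d x * F x \<le> r x ^ 2 / \<Lambda> * (e * M)"
        using F[of x] d(1)[of x] \<open>\<Lambda> > 0\<close> by (intro mult_mono) auto
      with nonneg show ?thesis
        by linarith
    qed
  qed
  also have "\<dots> = \<theta> * (\<Sum>x\<in>V. F x) + (\<Sum>x\<in>V. r x ^ 2) * (e * M) / \<Lambda>"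
    by (simp add: sum.distrib sum_distrib_left sum_distrib_right sum_divide_distrib)
  also have "\<dots> = \<theta> * (\<Sum>x\<in>V. F x) + e^2 * M / \<Lambda>"
    by (simp add: e_def power2_eq_square mult_ac)
  also have "\<dots> \<le> \<theta> * M^3 + e^2 * M / \<Lambda>"
    using \<open>(\<Sum>x\<in>V. F x) \<le> M ^ 3\<close> \<open>\<theta> \<ge> 0\<close> by (simp add: mult_left_mono)
  finally show ?thesis .
qed

lemma weighted_energy_truncate:
  assumes "finite V" "finite Y" and r: "\<And>x. 0 \<le> r x" "\<And>x. x \<notin> V \<Longrightarrow> r x = 0"
    and "\<theta> > 0" "\<Lambda> > 0"
  defines "M \<equiv> \<Sum>x\<in>V. r x" and "e \<equiv> \<Sum>x\<in>V. r x ^ 2"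
  shows "weighted_energy V Y r - weighted_energy V Y (\<lambda>x. if \<theta> \<le> r x \<and> r x \<le> \<Lambda> then r x else 0)
    \<le> 4 * (\<theta> * M^3 + e^2 * M / \<Lambda>)"
proof -
  define f where "f = (\<lambda>x. if \<theta> \<le> r x \<and> r x \<le> \<Lambda> then r x else 0)"
  have small_or_large: "r x - f x \<le> \<theta> \<or> r x - f x \<le> r x ^ 2 / \<Lambda>" for x
  proof (cases "r x \<le> \<Lambda>")
    case True
    then show ?thesis
      using \<open>\<theta> > 0\<close> by (auto simp: f_def)
  next
    case False
    then have "\<Lambda> * r x \<le> r x * r x"
      using r(1)[of x] by (intro mult_right_mono) auto
    then show ?thesis
      using False \<open>\<Lambda> > 0\<close> by (auto simp: f_def field_simps power2_eq_square)
  qed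
  have "weighted_energy V Y r - weighted_energy V Y f
      \<le> 4 * (\<Sum>y\<in>Y. conv V r r y * conv V (\<lambda>x. r x - f x) r y)"
    using r by (intro weighted_energy_diff_le[OF assms(1)]) (auto simp: f_def)
  also have "\<dots> \<le> 4 * (\<theta> * M^3 + e^2 * M / \<Lambda>)"
    unfolding M_def e_def using r \<open>\<theta> > 0\<close> \<open>\<Lambda> > 0\<close> small_or_large
    by (intro mult_left_mono sum_conv_mult_conv_le[OF assms(1,2)]) (auto simp: f_def)
  finally show ?thesis
    by (simp add: f_def)
qed

lemma weighted_energy_le_card_representations:
  assumes "finite V" "Q \<subseteq> V" and f: "\<And>x. 0 \<le> f x" "\<And>x. f x \<le> \<Lambda>" "\<And>x. x \<notin> Q \<Longrightarrow> f x = 0"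
  shows "weighted_energy V Y f \<le> \<Lambda>^4 * (\<Sum>y\<in>Y. real (card {x \<in> Q. y - x \<in> Q}) ^ 2)"
proof -
  have "conv V f f y \<le> \<Lambda>^2 * card {x \<in> Q. y - x \<in> Q}" for y
  proof -
    have "conv V f f y \<le> (\<Sum>x\<in>V. if x \<in> Q \<and> y - x \<in> Q then \<Lambda>^2 else 0)"
      unfolding conv_def
    proof (rule sum_mono)
      fix x
      show "f x * f (y - x) \<le> (if x \<in> Q \<and> y - x \<in> Q then \<Lambda>^2 else 0)"
        using f[of x] f[of "y - x"] order_trans[OF f(1) f(2)]
        by (cases "x \<in> Q \<and> y - x \<in> Q") (auto simp: power2_eq_square intro: mult_mono)
    qed
    also have "\<dots> = card {x \<in> Q. y - x \<in> Q} * \<Lambda>^2"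
    proof -
      have "{x \<in> V. x \<in> Q \<and> y - x \<in> Q} = {x \<in> Q. y - x \<in> Q}"
        using assms(2) by auto
      then show ?thesis
        using assms(1) by (simp add: sum.inter_filter[symmetric])
    qed
    finally show ?thesis
      by (simp add: mult.commute)
  qed
  then have "weighted_energy V Y f \<le> (\<Sum>y\<in>Y. (\<Lambda>^2 * card {x \<in> Q. y - x \<in> Q}) ^ 2)"
    unfolding weighted_energy_def using conv_nonneg[of f f, OF f(1) f(1)] by (intro sum_mono power_mono) auto
  then show ?thesis
    by (simp add: sum_distrib_left power_mult_distrib flip: power_mult)
qed

text \<open>
  The thresholds \<open>e / (16 K M)\<close> and \<open>16 K e / M\<close> are chosen so that truncating \<open>r\<close> to the
  values between them loses at most \<open>e M\<^sup>2 / (2 K)\<close> of the energy, half of what is assumed.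
\<close>

lemma level_set_mass_and_energy:
  fixes V Y :: "'a::ab_group_add set" and r :: "'a \<Rightarrow> real" and K :: real
  assumes "finite V" "finite Y" and r: "\<And>x. 0 \<le> r x" "\<And>x. x \<notin> V \<Longrightarrow> r x = 0"
    and "K > 0"
  defines "M \<equiv> \<Sum>x\<in>V. r x" and "e \<equiv> \<Sum>x\<in>V. r x ^ 2"
  assumes "M > 0" "e > 0" and energy: "M^2 * e / K \<le> weighted_energy V Y r"
  defines "Q \<equiv> {x \<in> V. e / (16 * K * M) \<le> r x \<and> r x \<le> 16 * K * e / M}"
  shows "M^2 / (2 * K) \<le> (\<Sum>x\<in>Q. r x)^2"
    and "e * M^2 / (2 * K) \<le> (16 * K * e / M)^4 * (\<Sum>y\<in>Y. real (card {x \<in> Q. y - x \<in> Q}) ^ 2)"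
proof -
  define \<theta> where "\<theta> = e / (16 * K * M)"
  define \<Lambda> where "\<Lambda> = 16 * K * e / M"
  define f where "f = (\<lambda>x. if \<theta> \<le> r x \<and> r x \<le> \<Lambda> then r x else 0)"
  have f: "0 \<le> f x" "f x \<le> r x" "f x \<le> \<Lambda>" "x \<notin> Q \<Longrightarrow> f x = 0" for x
    using r \<open>K > 0\<close> \<open>M > 0\<close> \<open>e > 0\<close> by (auto simp: f_def Q_def \<theta>_def \<Lambda>_def)
  have "weighted_energy V Y r - weighted_energy V Y f \<le> 4 * (\<theta> * M^3 + e^2 * M / \<Lambda>)"
    unfolding f_def M_def e_def using assms
    by (intro weighted_energy_truncate) (auto simp: \<theta>_def \<Lambda>_def M_def e_def)
  also have "4 * (\<theta> * M^3 + e^2 * M / \<Lambda>) = e * M^2 / (2 * K)"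
    using \<open>K > 0\<close> \<open>M > 0\<close> \<open>e > 0\<close> by (simp add: \<theta>_def \<Lambda>_def field_simps eval_nat_numeral)
  finally have truncated: "e * M^2 / (2 * K) \<le> weighted_energy V Y f"
    using energy \<open>K > 0\<close> by (simp add: field_simps)
  have "(\<Sum>x\<in>V. f x) = (\<Sum>x\<in>Q. r x)"
    unfolding f_def Q_def \<theta>_def \<Lambda>_def using \<open>finite V\<close> by (simp add: sum.inter_filter)
  moreover have "weighted_energy V Y f \<le> e * (\<Sum>x\<in>V. f x)^2"
    unfolding e_def by (rule weighted_energy_le) (use assms f in auto)
  ultimately have "weighted_energy V Y f \<le> e * (\<Sum>x\<in>Q. r x)^2"
    by simp
  with truncated have "e * M^2 / (2 * K) \<le> e * (\<Sum>x\<in>Q. r x)^2"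
    by (rule order_trans)
  then have "e * (M^2 / (2 * K)) \<le> e * (\<Sum>x\<in>Q. r x)^2"
    by simp
  then show "M^2 / (2 * K) \<le> (\<Sum>x\<in>Q. r x)^2"
    using \<open>e > 0\<close> by (rule mult_left_le_imp_le)
  have "Q \<subseteq> V"
    by (auto simp: Q_def)
  then have "weighted_energy V Y f \<le> \<Lambda>^4 * (\<Sum>y\<in>Y. real (card {x \<in> Q. y - x \<in> Q}) ^ 2)"
    by (intro weighted_energy_le_card_representations[OF assms(1)]) (use f in auto)
  with truncated show "e * M^2 / (2 * K) \<le> (16 * K * e / M)^4 * (\<Sum>y\<in>Y. real (card {x \<in> Q. y - x \<in> Q}) ^ 2)"
    by (simp add: \<Lambda>_def)
qed

lemma card_level_set_le:
  assumes "finite V" "\<theta> > 0" and r: "\<And>x. 0 \<le> r x"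
  shows "card {x \<in> V. \<theta> \<le> r x \<and> r x \<le> \<Lambda>} \<le> (\<Sum>x\<in>V. r x) / \<theta>"
proof -
  have "card {x \<in> V. \<theta> \<le> r x \<and> r x \<le> \<Lambda>} * \<theta> \<le> (\<Sum>x\<in>{x \<in> V. \<theta> \<le> r x \<and> r x \<le> \<Lambda>}. r x)"
    by (intro sum_bounded_below) auto
  also have "\<dots> \<le> (\<Sum>x\<in>V. r x)"
    using assms by (intro sum_mono2) auto
  finally show ?thesis
    using \<open>\<theta> > 0\<close> by (simp add: pos_le_divide_eq)
qed

lemma sum_squared_subset_ge:
  fixes r :: "'a \<Rightarrow> real" and \<theta> \<Lambda> C :: real
  assumes "finite Q" "A \<subseteq> Q" "\<theta> \<ge> 0" "C \<ge> 0" and bounds: "\<And>x. x \<in> Q \<Longrightarrow> \<theta> \<le> r x \<and> r x \<le> \<Lambda>"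
    and large: "card Q ^ 2 \<le> C * card A ^ 2"
  shows "\<theta>^2 * (\<Sum>x\<in>Q. r x)^2 \<le> C * \<Lambda>^2 * (\<Sum>x\<in>A. r x)^2"
proof -
  have "0 \<le> (\<Sum>x\<in>Q. r x)"
    using bounds \<open>\<theta> \<ge> 0\<close> by (intro sum_nonneg) (meson order_trans)
  moreover have "(\<Sum>x\<in>Q. r x) \<le> card Q * \<Lambda>"
    using bounds by (intro sum_bounded_above) auto
  ultimately have "\<theta>^2 * (\<Sum>x\<in>Q. r x)^2 \<le> \<theta>^2 * (card Q ^ 2 * \<Lambda>^2)"
    by (intro mult_left_mono) (auto simp: power_mult_distrib[symmetric] intro: power_mono)
  also have "\<dots> \<le> \<theta>^2 * (C * card A ^ 2 * \<Lambda>^2)"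
    using large by (intro mult_left_mono mult_right_mono) auto
  also have "\<dots> = C * \<Lambda>^2 * (card A * \<theta>)^2"
    by (simp add: power_mult_distrib mult_ac)
  also have "\<dots> \<le> C * \<Lambda>^2 * (\<Sum>x\<in>A. r x)^2"
    using assms by (intro mult_left_mono power_mono sum_bounded_below) auto
  finally show ?thesis .
qed

theorem weighted_Balog_Szemeredi_Gowers:
  fixes V Y :: "'a::ab_group_add set" and r :: "'a \<Rightarrow> real" and K :: real
  assumes "finite V" "finite Y" and r: "\<And>x. 0 \<le> r x" "\<And>x. x \<notin> V \<Longrightarrow> r x = 0"
    and "K > 0"
  defines "M \<equiv> \<Sum>x\<in>V. r x" and "e \<equiv> \<Sum>x\<in>V. r x ^ 2"
  assumes "M > 0" and energy: "M^2 * e / K \<le> weighted_energy V Y r"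
  obtains A where "A \<subseteq> V" "A \<noteq> {}" "M^2 / (2^80 * K^21) \<le> (\<Sum>x\<in>A. r x)^2"
    and "card A \<le> 16 * K * M^2 / e" "card (A + uminus ` A) \<le> 2^312 * K^80 * card A"
proof -
  define \<theta> where "\<theta> = e / (16 * K * M)"
  define \<Lambda> where "\<Lambda> = 16 * K * e / M"
  define Q where "Q = {x \<in> V. \<theta> \<le> r x \<and> r x \<le> \<Lambda>}"
  define \<kappa> :: real where "\<kappa> = 2^29 * K^8"
  have "e > 0"
  proof -
    have "\<exists>x\<in>V. r x \<noteq> 0"
      using \<open>M > 0\<close> by (auto simp: M_def intro: ccontr)
    then show ?thesis
      using \<open>finite V\<close> by (auto simp: e_def intro!: sum_pos2)
  qed
  have mass_Q: "M^2 / (2 * K) \<le> (\<Sum>x\<in>Q. r x)^2"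
    unfolding M_def Q_def \<theta>_def \<Lambda>_def e_def
    by (rule level_set_mass_and_energy(1)) (use assms \<open>e > 0\<close> in \<open>simp_all add: M_def e_def\<close>)
  have energy_Q: "e * M^2 / (2 * K) \<le> \<Lambda>^4 * (\<Sum>y\<in>Y. real (card {x \<in> Q. y - x \<in> Q}) ^ 2)"
    unfolding M_def Q_def \<theta>_def \<Lambda>_def e_def
    by (rule level_set_mass_and_energy(2)) (use assms \<open>e > 0\<close> in \<open>simp_all add: M_def e_def\<close>)
  have "finite Q" "Q \<subseteq> V"
    using \<open>finite V\<close> by (auto simp: Q_def)
  have "0 < M^2 / (2 * K)"
    using \<open>K > 0\<close> \<open>M > 0\<close> by simp
  with mass_Q have "Q \<noteq> {}"
    by auto
  have "\<theta> > 0" "\<Lambda> > 0"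
    using \<open>K > 0\<close> \<open>M > 0\<close> \<open>e > 0\<close> by (simp_all add: \<theta>_def \<Lambda>_def)
  have "card Q \<le> M / \<theta>"
    unfolding Q_def M_def using assms(1) \<open>\<theta> > 0\<close> r(1) by (rule card_level_set_le)
  have "card Q ^ 3 / \<kappa> \<le> (\<Sum>y\<in>Y. real (card {x \<in> Q. y - x \<in> Q}) ^ 2)"
  proof -
    have "card Q ^ 3 / \<kappa> \<le> (M / \<theta>) ^ 3 / \<kappa>"
      using \<open>card Q \<le> M / \<theta>\<close> \<open>K > 0\<close> by (intro divide_right_mono power_mono) (auto simp: \<kappa>_def)
    also have "\<dots> = e * M^2 / (2 * K) / \<Lambda>^4"
      using \<open>K > 0\<close> \<open>M > 0\<close> \<open>e > 0\<close> by (simp add: \<theta>_def \<Lambda>_def \<kappa>_def field_simps eval_nat_numeral)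
    also have "\<dots> \<le> (\<Sum>y\<in>Y. real (card {x \<in> Q. y - x \<in> Q}) ^ 2)"
      using energy_Q \<open>K > 0\<close> \<open>M > 0\<close> \<open>e > 0\<close> by (simp add: \<Lambda>_def field_simps)
    finally show ?thesis .
  qed
  moreover have "\<kappa> > 0"
    using \<open>K > 0\<close> by (simp add: \<kappa>_def)
  ultimately obtain A where A: "A \<subseteq> Q" "A \<noteq> {}" "card Q ^ 2 \<le> 32 * \<kappa>^2 * card A ^ 2"
    and doubling: "card (A + uminus ` A) \<le> 2^22 * \<kappa>^10 * card A"
    using Balog_Szemeredi_Gowers[OF \<open>finite Q\<close> \<open>Q \<noteq> {}\<close> \<open>finite Y\<close>] by blast
  have "\<theta>^2 * (\<Sum>x\<in>Q. r x)^2 \<le> 32 * \<kappa>^2 * \<Lambda>^2 * (\<Sum>x\<in>A. r x)^2"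
    by (rule sum_squared_subset_ge[OF \<open>finite Q\<close> A(1) _ _ _ A(3)]) (use \<open>\<theta> > 0\<close> in \<open>auto simp: Q_def\<close>)
  have "M^2 / (2^80 * K^21) = \<theta>^2 * (M^2 / (2 * K)) / (32 * \<kappa>^2 * \<Lambda>^2)"
    using \<open>K > 0\<close> \<open>M > 0\<close> \<open>e > 0\<close> by (simp add: \<theta>_def \<Lambda>_def \<kappa>_def field_simps eval_nat_numeral)
  also have "\<dots> \<le> \<theta>^2 * (\<Sum>x\<in>Q. r x)^2 / (32 * \<kappa>^2 * \<Lambda>^2)"
    using mass_Q by (intro divide_right_mono mult_left_mono) auto
  also have "\<dots> \<le> (\<Sum>x\<in>A. r x)^2"
    using \<open>\<theta>^2 * (\<Sum>x\<in>Q. r x)^2 \<le> 32 * \<kappa>^2 * \<Lambda>^2 * (\<Sum>x\<in>A. r x)^2\<close> \<open>\<kappa> > 0\<close> \<open>\<Lambda> > 0\<close>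
    by (simp add: pos_divide_le_eq mult_ac)
  finally have mass_A: "M^2 / (2^80 * K^21) \<le> (\<Sum>x\<in>A. r x)^2" .
  have "card A \<le> card Q"
    using A(1) \<open>finite Q\<close> by (simp add: card_mono)
  then have "card A \<le> M / \<theta>"
    using \<open>card Q \<le> M / \<theta>\<close> by (simp add: order_trans)
  also have "M / \<theta> = 16 * K * M^2 / e"
    using \<open>K > 0\<close> \<open>M > 0\<close> \<open>e > 0\<close> by (simp add: \<theta>_def field_simps power2_eq_square)
  finally have "card A \<le> 16 * K * M^2 / e" .
  moreover have "card (A + uminus ` A) \<le> 2^312 * K^80 * card A"
    using doubling by (simp add: \<kappa>_def power_mult_distrib flip: power_mult)
  ultimately show ?thesis
    using that A mass_A \<open>Q \<subseteq> V\<close> by blast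
qed

section \<open>Representation counts and additive energy\<close>

definition tuples :: "nat \<Rightarrow> 'a set \<Rightarrow> (nat \<Rightarrow> 'a) set" where
  "tuples t A = {0..<t} \<rightarrow>\<^sub>E A"

definition rep_count :: "nat \<Rightarrow> 'a::comm_monoid_add set \<Rightarrow> 'a \<Rightarrow> nat" where
  "rep_count t A x = card {f \<in> tuples t A. (\<Sum>i<t. f i) = x}"

definition split_tuple :: "nat \<Rightarrow> nat \<Rightarrow> (nat \<Rightarrow> 'a) \<Rightarrow> (nat \<Rightarrow> 'a) \<times> (nat \<Rightarrow> 'a)" where
  "split_tuple a b f = (restrict f {0..<a}, restrict (\<lambda>i. f (a + i)) {0..<b})"

lemma finite_tuples: "finite A \<Longrightarrow> finite (tuples t A)"
  by (simp add: tuples_def finite_PiE)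

lemma card_tuples: "finite A \<Longrightarrow> card (tuples t A) = card A ^ t"
  by (simp add: tuples_def card_funcsetE)

lemma sum_tuple_in_iterated_sumset: "f \<in> tuples t A \<Longrightarrow> (\<Sum>i<t. f i) \<in> iterated_sumset t A"
  unfolding tuples_def iterated_sumset_eq by (auto simp: PiE_iff intro!: exI[of _ f])

lemma iterated_sumset_nonempty: "A \<noteq> {} \<Longrightarrow> iterated_sumset t A \<noteq> {}"
  by (induction t) (auto simp: set_plus_def)

lemma rep_count_eq_0:
  assumes "x \<notin> iterated_sumset t A"
  shows "rep_count t A x = 0"
proof -
  have "{f \<in> tuples t A. (\<Sum>i<t. f i) = x} = {}"
    using assms sum_tuple_in_iterated_sumset by blast
  then show ?thesis
    by (simp only: rep_count_def card.empty)
qed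

lemma sum_lessThan_add_nat:
  fixes f :: "nat \<Rightarrow> 'a::comm_monoid_add" and b :: nat
  shows "(\<Sum>i<a + b. f i) = (\<Sum>i<a. f i) + (\<Sum>i<b. f (a + i))"
  by (induction b) (simp_all add: add.assoc)

lemma sum_split_tuple:
  "(\<Sum>i<a + b. f i) = (\<Sum>i<a. fst (split_tuple a b f) i) + (\<Sum>i<b. snd (split_tuple a b f) i)"
  by (simp add: split_tuple_def sum_lessThan_add_nat)

lemma bij_betw_split_tuple:
  "bij_betw (split_tuple a b) (tuples (a + b) A) (tuples a A \<times> tuples b A)"
proof (rule bij_betw_byWitness[where f'="\<lambda>(g, h) i. if i < a then g i else if i < a + b then h (i - a) else undefined"])
  show "\<forall>f\<in>tuples (a + b) A. (\<lambda>(g, h) i. if i < a then g i else if i < a + b then h (i - a) else undefined)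
      (split_tuple a b f) = f"
    by (auto simp: split_tuple_def tuples_def PiE_iff extensional_def fun_eq_iff)
  show "\<forall>p\<in>tuples a A \<times> tuples b A.
      split_tuple a b ((\<lambda>(g, h) i. if i < a then g i else if i < a + b then h (i - a) else undefined) p) = p"
    by (auto simp: split_tuple_def tuples_def PiE_iff extensional_def fun_eq_iff)
  show "split_tuple a b ` tuples (a + b) A \<subseteq> tuples a A \<times> tuples b A"
    by (auto simp: split_tuple_def tuples_def PiE_iff)
  show "(\<lambda>(g, h) i. if i < a then g i else if i < a + b then h (i - a) else undefined)
      ` (tuples a A \<times> tuples b A) \<subseteq> tuples (a + b) A"
    by (auto simp: tuples_def PiE_iff)
qed

lemma card_tuples_split:
  "card {f \<in> tuples (a + b) A. P (split_tuple a b f)} = card {p \<in> tuples a A \<times> tuples b A. P p}"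
proof -
  have inj: "inj_on (split_tuple a b) (tuples (a + b) A)"
    and image: "split_tuple a b ` tuples (a + b) A = tuples a A \<times> tuples b A"
    using bij_betw_split_tuple[of a b A] by (auto simp: bij_betw_def)
  have "split_tuple a b ` {f \<in> tuples (a + b) A. P (split_tuple a b f)}
      = {p \<in> split_tuple a b ` tuples (a + b) A. P p}"
    by auto
  also have "\<dots> = {p \<in> tuples a A \<times> tuples b A. P p}"
    by (simp only: image)
  finally have eq: "split_tuple a b ` {f \<in> tuples (a + b) A. P (split_tuple a b f)}
      = {p \<in> tuples a A \<times> tuples b A. P p}" .
  have "inj_on (split_tuple a b) {f \<in> tuples (a + b) A. P (split_tuple a b f)}"
    using inj by (rule inj_on_subset) auto
  from card_image[OF this] show ?thesis
    unfolding eq by simp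
qed

lemma card_pairs_eq_sum_fibres:
  assumes "finite S" "finite T" "finite X" "\<phi> ` S \<subseteq> X"
  shows "card {p \<in> S \<times> T. P (\<phi> (fst p)) (snd p)} = (\<Sum>x\<in>X. card {g \<in> S. \<phi> g = x} * card {h \<in> T. P x h})"
proof -
  have "{p \<in> S \<times> T. P (\<phi> (fst p)) (snd p)} = (\<Union>x\<in>X. {g \<in> S. \<phi> g = x} \<times> {h \<in> T. P x h})"
    using assms(4) by auto
  then show ?thesis
    using assms(1-3) by (simp add: card_UN_disjoint card_cartesian_product disjoint_iff)
qed

lemma sum_rep_count:
  assumes "finite A" "finite Q"
  shows "(\<Sum>x\<in>Q. rep_count t A x) = card {f \<in> tuples t A. (\<Sum>i<t. f i) \<in> Q}"
proof -
  have "{f \<in> tuples t A. (\<Sum>i<t. f i) \<in> Q} = (\<Union>x\<in>Q. {f \<in> tuples t A. (\<Sum>i<t. f i) = x})"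
    by auto
  then show ?thesis
    using assms by (simp add: rep_count_def card_UN_disjoint finite_tuples disjoint_iff)
qed

lemma sum_rep_count_iterated_sumset:
  assumes "finite A"
  shows "(\<Sum>x\<in>iterated_sumset t A. rep_count t A x) = card A ^ t"
proof -
  have "{f \<in> tuples t A. (\<Sum>i<t. f i) \<in> iterated_sumset t A} = tuples t A"
    using sum_tuple_in_iterated_sumset by blast
  then show ?thesis
    using assms by (simp add: sum_rep_count finite_iterated_sumset card_tuples)
qed

lemma energy_eq_sum_rep_count:
  assumes "finite A"
  shows "energy t A = (\<Sum>x\<in>iterated_sumset t A. rep_count t A x ^ 2)"
proof -
  have "energy t A = card {f \<in> tuples (t + t) A.
      (\<lambda>p. (\<Sum>i<t. fst p i) = (\<Sum>i<t. snd p i)) (split_tuple t t f)}"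
    unfolding energy_def tuples_def by (simp add: split_tuple_def mult_2)
  also have "\<dots> = card {p \<in> tuples t A \<times> tuples t A. (\<Sum>i<t. fst p i) = (\<Sum>i<t. snd p i)}"
    by (rule card_tuples_split)
  also have "\<dots> = (\<Sum>x\<in>iterated_sumset t A. rep_count t A x * rep_count t A x)"
    using assms sum_tuple_in_iterated_sumset
    by (subst card_pairs_eq_sum_fibres[where X="iterated_sumset t A"])
      (auto simp: finite_tuples finite_iterated_sumset rep_count_def eq_commute)
  finally show ?thesis
    by (simp add: power2_eq_square)
qed

lemma rep_count_add:
  fixes A :: "'a::ab_group_add set"
  assumes "finite A"
  shows "rep_count (a + b) A y = (\<Sum>x\<in>iterated_sumset a A. rep_count a A x * rep_count b A (y - x))"
proof -
  have "rep_count (a + b) A y = card {f \<in> tuples (a + b) A.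
      (\<lambda>p. (\<Sum>i<a. fst p i) + (\<Sum>i<b. snd p i) = y) (split_tuple a b f)}"
    unfolding rep_count_def by (simp add: sum_split_tuple)
  also have "\<dots> = card {p \<in> tuples a A \<times> tuples b A. (\<Sum>i<a. fst p i) + (\<Sum>i<b. snd p i) = y}"
    by (rule card_tuples_split)
  also have "\<dots> = card {p \<in> tuples a A \<times> tuples b A. (\<Sum>i<b. snd p i) = y - (\<Sum>i<a. fst p i)}"
    by (rule arg_cong[where f=card]) (auto simp: eq_diff_eq add.commute)
  also have "\<dots> = (\<Sum>x\<in>iterated_sumset a A. rep_count a A x * rep_count b A (y - x))"
    using assms sum_tuple_in_iterated_sumset
    by (subst card_pairs_eq_sum_fibres[where X="iterated_sumset a A"])
      (auto simp: finite_tuples finite_iterated_sumset rep_count_def)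
  finally show ?thesis .
qed

lemma card_tuples_one: "card {h \<in> tuples 1 A. P (h 0)} = card {a \<in> A. P a}"
  by (intro bij_betw_same_card[where f="\<lambda>h. h 0"] bij_betw_byWitness[where f'="\<lambda>a. restrict (\<lambda>_. a) {0..<1}"])
    (auto simp: tuples_def PiE_iff extensional_def fun_eq_iff)

lemma exists_translate_in_tuple_sums:
  fixes A Q :: "'a::ab_group_add set"
  assumes "finite A" "A \<noteq> {}" "finite Q" "k \<ge> 1"
  obtains t where "(\<Sum>y\<in>Q. rep_count k A y) \<le> card A ^ (k - 1) * card {a \<in> A. t + a \<in> Q}"
proof -
  define j where "j = k - 1"
  define w where "w x = card {h \<in> tuples 1 A. x + h 0 \<in> Q}" for x
  have "finite (iterated_sumset j A)" "iterated_sumset j A \<noteq> {}"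
    using assms by (simp_all add: finite_iterated_sumset iterated_sumset_nonempty)
  then obtain t where t: "\<And>x. x \<in> iterated_sumset j A \<Longrightarrow> w x \<le> w t"
    using Max_ge[of "w ` iterated_sumset j A"] Max_in[of "w ` iterated_sumset j A"] by fastforce
  have "k = j + 1"
    using \<open>k \<ge> 1\<close> by (simp add: j_def)
  then have "(\<Sum>y\<in>Q. rep_count k A y) = card {f \<in> tuples (j + 1) A. (\<Sum>i<j + 1. f i) \<in> Q}"
    using assms by (simp add: sum_rep_count)
  also have "\<dots> = card {f \<in> tuples (j + 1) A.
      (\<lambda>p. (\<Sum>i<j. fst p i) + (\<Sum>i<1. snd p i) \<in> Q) (split_tuple j 1 f)}"
    by (simp only: sum_split_tuple)
  also have "\<dots> = card {p \<in> tuples j A \<times> tuples 1 A. (\<Sum>i<j. fst p i) + (\<Sum>i<1. snd p i) \<in> Q}"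
    by (rule card_tuples_split)
  also have "\<dots> = (\<Sum>x\<in>iterated_sumset j A. rep_count j A x * w x)"
    using assms sum_tuple_in_iterated_sumset
    by (subst card_pairs_eq_sum_fibres[where X="iterated_sumset j A"])
      (auto simp: finite_tuples finite_iterated_sumset rep_count_def w_def)
  also have "\<dots> \<le> (\<Sum>x\<in>iterated_sumset j A. rep_count j A x * w t)"
    using t by (intro sum_mono mult_left_mono) auto
  also have "\<dots> = card A ^ j * w t"
    using assms by (simp add: sum_rep_count_iterated_sumset flip: sum_distrib_right)
  finally show ?thesis
    using that card_tuples_one[where P="\<lambda>a. t + a \<in> Q" and A=A] by (simp add: j_def w_def)
qed

lemma sum_rep_count_squared:
  "finite A \<Longrightarrow> (\<Sum>x\<in>iterated_sumset k A. real (rep_count k A x) ^ 2) = energy k A"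
  by (simp add: energy_eq_sum_rep_count flip: of_nat_power of_nat_sum)

lemma weighted_energy_rep_count:
  fixes A :: "real set"
  assumes "finite A"
  shows "weighted_energy (iterated_sumset k A) (iterated_sumset (2 * k) A) (\<lambda>x. real (rep_count k A x))
    = energy (2 * k) A"
proof -
  have "conv (iterated_sumset k A) (\<lambda>x. real (rep_count k A x)) (\<lambda>x. real (rep_count k A x)) y
      = rep_count (2 * k) A y" for y
    using rep_count_add[OF assms, of k k y] by (simp add: conv_def mult_2)
  then show ?thesis
    by (simp add: weighted_energy_def energy_eq_sum_rep_count[OF assms])
qed

lemma energy_double_le:
  fixes A :: "real set"
  assumes "finite A"
  shows "real (energy (2 * k) A) \<le> real (energy k A) * real (card A) ^ (2 * k)"
proof -
  let ?r = "\<lambda>x. real (rep_count k A x)"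
  have "real (energy (2 * k) A) = weighted_energy (iterated_sumset k A) (iterated_sumset (2 * k) A) ?r"
    using weighted_energy_rep_count[OF assms] by simp
  also have "\<dots> \<le> (\<Sum>x\<in>iterated_sumset k A. ?r x ^ 2) * (\<Sum>x\<in>iterated_sumset k A. ?r x)^2"
    by (rule weighted_energy_le) (use assms in \<open>auto simp: finite_iterated_sumset rep_count_eq_0\<close>)
  also have "\<dots> = real (energy k A) * real (card A) ^ (2 * k)"
    using assms by (simp add: sum_rep_count_squared sum_rep_count_iterated_sumset mult.commute
        flip: of_nat_sum power_mult)
  finally show ?thesis .
qed

section \<open>The energy dichotomy\<close>

lemma card_sumdiff_le_if_small_doubling:
  fixes A Q :: "real set" and L :: real
  assumes "finite Q" "Q \<noteq> {}" and doubling: "card (Q + uminus ` Q) \<le> L * card Q"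
    and translate: "\<And>a. a \<in> A \<Longrightarrow> t + a \<in> Q"
  shows "card (sumdiff m n A) \<le> L ^ (m + n) * card Q"
proof -
  have "card (sumdiff m n A) \<le> card (sumdiff m n Q)"
    using assms(1) translate by (rule card_sumdiff_le_if_translate_subset)
  then have "real (card (sumdiff m n A)) \<le> card (sumdiff m n Q)"
    by simp
  also have "\<dots> \<le> L ^ (m + n) * card Q"
    unfolding sumdiff_eq_iterated_sumset using assms(1,2) doubling by (rule Pluennecke_Ruzsa_inequality)
  finally show ?thesis .
qed

lemma card_sumdiff_le_power_bound:
  fixes A Q :: "real set" and c K B :: real
  assumes "finite Q" "Q \<noteq> {}" "c \<ge> 1" "K \<ge> 1" "B \<ge> 1"
    and doubling: "card (Q + uminus ` Q) \<le> c * K^80 * card Q"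
    and size: "card Q \<le> 16 * K * B" and translate: "\<And>a. a \<in> A \<Longrightarrow> t + a \<in> Q"
  shows "card (sumdiff m n A) \<le> 16 * c^(m + n) * (K^(240 * (m + n)) * B)"
proof (cases "m + n = 0")
  case True
  then show ?thesis
    using \<open>B \<ge> 1\<close> by (simp add: sumdiff_eq_iterated_sumset)
next
  case False
  have "card (sumdiff m n A) \<le> (c * K^80) ^ (m + n) * card Q"
    using assms(1,2) doubling translate by (rule card_sumdiff_le_if_small_doubling)
  also have "\<dots> \<le> (c * K^80) ^ (m + n) * (16 * K * B)"
    using size \<open>c \<ge> 1\<close> \<open>K \<ge> 1\<close> by (intro mult_left_mono) auto
  also have "\<dots> = 16 * c^(m + n) * (K^(80 * (m + n) + 1) * B)"
  proof -
    have "(c * K^80) ^ (m + n) = c^(m + n) * K^(80 * (m + n))"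
      by (simp only: power_mult_distrib power_mult)
    then show ?thesis
      by (simp add: mult_ac)
  qed
  also have "\<dots> \<le> 16 * c^(m + n) * (K^(240 * (m + n)) * B)"
    using False \<open>c \<ge> 1\<close> \<open>K \<ge> 1\<close> \<open>B \<ge> 1\<close>
    by (intro mult_right_mono mult_left_mono power_increasing) auto
  finally show ?thesis .
qed

lemma powr_two_mult_eq_power2:
  fixes x :: real
  assumes "x > 0"
  shows "x powr (2 * real k) = (x ^ k)^2"
proof -
  have "x powr (2 * real k) = x ^ (k * 2)"
    using assms by (simp add: powr_realpow[symmetric] mult.commute)
  then show ?thesis
    by (simp only: power_mult)
qed

lemma energy_bounds_from_hypotheses:
  fixes A :: "real set" and \<nu> K :: real
  defines "N \<equiv> real (card A)"
  assumes "finite A" "A \<noteq> {}" "K > 0"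
    and energy_2k: "N powr (4 * real k - \<nu>) \<le> energy (2 * k) A"
    and energy_k: "energy k A \<le> N powr (2 * real k - \<nu>) * K"
  shows "N powr (2 * real k - \<nu>) \<le> energy k A"
    and "(N ^ k)^2 * real (energy k A) / K \<le> energy (2 * k) A"
proof -
  have "N > 0"
    using assms by (simp add: N_def card_gt_0_iff)
  have square: "N powr (2 * real k - \<nu>) * (N ^ k)^2 = N powr (4 * real k - \<nu>)"
    by (simp add: powr_two_mult_eq_power2[OF \<open>N > 0\<close>, symmetric] flip: powr_add)
  also have "\<dots> \<le> energy (2 * k) A"
    by (rule energy_2k)
  also have "\<dots> \<le> real (energy k A) * N ^ (2 * k)"
    using energy_double_le[OF \<open>finite A\<close>, of k] by (simp only: N_def)
  also have "N ^ (2 * k) = (N ^ k)^2"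
    by (simp add: power_mult[symmetric] mult.commute)
  finally have "N powr (2 * real k - \<nu>) * (N ^ k)^2 \<le> real (energy k A) * (N ^ k)^2" .
  then show "N powr (2 * real k - \<nu>) \<le> energy k A"
    by (rule mult_right_le_imp_le) (use \<open>N > 0\<close> in simp)
  have "real (energy k A) / K \<le> N powr (2 * real k - \<nu>)"
    using energy_k \<open>K > 0\<close> by (simp add: pos_divide_le_eq)
  then have "(N ^ k)^2 * (real (energy k A) / K) \<le> (N ^ k)^2 * N powr (2 * real k - \<nu>)"
    by (rule mult_left_mono) simp
  also have "\<dots> = N powr (4 * real k - \<nu>)"
    by (subst mult.commute) (rule square)
  also have "\<dots> \<le> energy (2 * k) A"
    by (rule energy_2k)
  finally show "(N ^ k)^2 * real (energy k A) / K \<le> energy (2 * k) A"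
    by simp
qed

lemma exists_structured_subset_of_sumset:
  fixes A :: "real set" and \<nu> K :: real
  defines "N \<equiv> real (card A)"
  assumes "finite A" "A \<noteq> {}" "K > 0"
    and energy_2k: "N powr (4 * real k - \<nu>) \<le> energy (2 * k) A"
    and energy_k: "energy k A \<le> N powr (2 * real k - \<nu>) * K"
  obtains Q where "Q \<subseteq> iterated_sumset k A" "Q \<noteq> {}"
    "N ^ (2 * k) / (2^80 * K^21) \<le> (\<Sum>x\<in>Q. real (rep_count k A x))^2"
    "card Q \<le> 16 * K * N powr \<nu>" "card (Q + uminus ` Q) \<le> 2^312 * K^80 * card Q"
proof -
  define V where "V = iterated_sumset k A"
  define r where "r x = real (rep_count k A x)" for x
  define e where "e = real (energy k A)"
  have "N > 0"
    using assms by (simp add: N_def card_gt_0_iff)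
  have e_lower: "N powr (2 * real k - \<nu>) \<le> e"
    and E_lower: "(N ^ k)^2 * e / K \<le> energy (2 * k) A"
    using energy_bounds_from_hypotheses[OF assms(2-4) energy_2k[unfolded N_def] energy_k[unfolded N_def]]
    by (simp_all add: e_def N_def)
  have r: "0 \<le> r x" "x \<notin> V \<Longrightarrow> r x = 0" for x
    by (simp_all add: r_def V_def rep_count_eq_0)
  have mass: "(\<Sum>x\<in>V. r x) = N ^ k" and sq: "(\<Sum>x\<in>V. r x ^ 2) = e"
    using \<open>finite A\<close> by (simp_all add: V_def r_def e_def N_def sum_rep_count_squared
        sum_rep_count_iterated_sumset flip: of_nat_sum)
  have E: "weighted_energy V (iterated_sumset (2 * k) A) r = energy (2 * k) A"
    unfolding V_def r_def using \<open>finite A\<close> by (rule weighted_energy_rep_count)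
  have "finite V" "finite (iterated_sumset (2 * k) A)"
    using \<open>finite A\<close> by (simp_all add: V_def finite_iterated_sumset)
  have "(N ^ k)^2 * e / K \<le> weighted_energy V (iterated_sumset (2 * k) A) r"
    using E_lower by (simp only: E)
  moreover have "0 < N ^ k"
    using \<open>N > 0\<close> by simp
  ultimately obtain Q where Q: "Q \<subseteq> V" "Q \<noteq> {}" "(N ^ k)^2 / (2^80 * K^21) \<le> (\<Sum>x\<in>Q. r x)^2"
    "card Q \<le> 16 * K * (N ^ k)^2 / e" "card (Q + uminus ` Q) \<le> 2^312 * K^80 * card Q"
    using weighted_Balog_Szemeredi_Gowers[of V "iterated_sumset (2 * k) A" r K, unfolded mass sq,
        OF \<open>finite V\<close> \<open>finite (iterated_sumset (2 * k) A)\<close> r \<open>K > 0\<close>] by blast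
  have "0 < N powr (2 * real k - \<nu>)"
    using \<open>N > 0\<close> by simp
  with e_lower have "0 < e"
    by linarith
  have "card Q \<le> 16 * K * (N ^ k)^2 / e"
    by (fact Q(4))
  also have "\<dots> \<le> 16 * K * (N ^ k)^2 / N powr (2 * real k - \<nu>)"
    using \<open>K > 0\<close>
    by (intro divide_left_mono[OF e_lower _ mult_pos_pos[OF \<open>0 < e\<close> \<open>0 < N powr (2 * real k - \<nu>)\<close>]]) simp
  also have "\<dots> = 16 * K * N powr \<nu>"
    using \<open>N > 0\<close> by (simp add: powr_two_mult_eq_power2[symmetric] powr_diff)
  finally have "card Q \<le> 16 * K * N powr \<nu>" .
  moreover have "N ^ (2 * k) = (N ^ k)^2"
    by (simp add: power_mult[symmetric] mult.commute)
  ultimately show ?thesis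
    using that[of Q] Q by (simp add: V_def r_def)
qed

lemma large_translate_of_popular_subset:
  fixes A Q :: "real set" and K :: real
  defines "N \<equiv> real (card A)"
  assumes "finite A" "A \<noteq> {}" "finite Q" "k \<ge> 1" "K \<ge> 1"
    and popular: "N ^ (2 * k) / (2^80 * K^21) \<le> (\<Sum>x\<in>Q. real (rep_count k A x))^2"
  obtains t where "N / (2^40 * K^82) \<le> card {a \<in> A. t + a \<in> Q}"
proof -
  obtain t where t: "(\<Sum>y\<in>Q. rep_count k A y) \<le> card A ^ (k - 1) * card {a \<in> A. t + a \<in> Q}"
    using exists_translate_in_tuple_sums[OF assms(2-5)] .
  define c where "c = real (card {a \<in> A. t + a \<in> Q})"
  have "N > 0"
    using assms by (simp add: N_def card_gt_0_iff)
  have "(\<Sum>x\<in>Q. real (rep_count k A x)) \<le> N ^ (k - 1) * c"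
    using of_nat_mono[where 'a=real, OF t] by (simp add: N_def c_def)
  then have "(\<Sum>x\<in>Q. real (rep_count k A x))^2 \<le> (N ^ (k - 1) * c)^2"
    by (intro power_mono) (simp_all add: sum_nonneg)
  with popular have bound: "N ^ (2 * k) / (2^80 * K^21) \<le> (N ^ (k - 1) * c)^2"
    by (rule order_trans)
  have split_power: "N ^ (2 * k) = (N ^ (k - 1))^2 * N^2"
  proof -
    have "N ^ (2 * k) = (N ^ k)^2"
      by (simp add: power_mult[symmetric] mult.commute)
    also have "\<dots> = (N ^ (k - 1) * N)^2"
      using power_minus_mult[of k N] \<open>k \<ge> 1\<close> by simp
    finally show ?thesis
      by (simp add: power_mult_distrib)
  qed
  from bound have "(N ^ (k - 1))^2 * N^2 / (2^80 * K^21) \<le> (N ^ (k - 1))^2 * c^2"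
    unfolding split_power power_mult_distrib .
  then have "(N ^ (k - 1))^2 * (N^2 / (2^80 * K^21)) \<le> (N ^ (k - 1))^2 * c^2"
    by simp
  then have "N^2 / (2^80 * K^21) \<le> c^2"
    by (rule mult_left_le_imp_le) (use \<open>N > 0\<close> in simp)
  moreover have "(N / (2^40 * K^82))^2 \<le> N^2 / (2^80 * K^21)"
  proof -
    have "(N / (2^40 * K^82))^2 = N^2 / (2^80 * K^164)"
      by (simp add: power_divide power_mult_distrib power_mult[symmetric])
    also have "\<dots> \<le> N^2 / (2^80 * K^21)"
      using \<open>K \<ge> 1\<close> by (intro divide_left_mono mult_left_mono power_increasing) auto
    finally show ?thesis .
  qed
  ultimately have "(N / (2^40 * K^82))^2 \<le> c^2"
    by linarith
  then have "N / (2^40 * K^82) \<le> c"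
    by (rule power2_le_imp_le) (simp add: c_def)
  then show ?thesis
    using that by (simp add: c_def)
qed

theorem energy_dichotomy_explicit:
  fixes \<nu> \<delta> :: real and s :: nat and A :: "real set"
  defines "N \<equiv> real (card A)"
  assumes "\<nu> \<ge> 1" "\<delta> > 0" "even s" "s \<ge> 4" "finite A" "A \<noteq> {}"
    and energy_s: "N powr (2 * real s - \<nu>) \<le> energy s A"
  shows "N powr (real s - \<nu> + \<delta>) < energy (s div 2) A
    \<or> (\<exists>A' \<subseteq> A. N powr (1 - 82 * \<delta>) / 2^40 \<le> card A' \<and>
         (\<forall>m n. card (sumdiff m n A') \<le> 16 * (2^312)^(m + n) * N powr (\<nu> + 240 * real (m + n) * \<delta>)))"
proof (cases "N powr (real s - \<nu> + \<delta>) < energy (s div 2) A")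
  case True
  then show ?thesis ..
next
  case False
  define k where "k = s div 2"
  define K where "K = N powr \<delta>"
  have s: "s = 2 * k" "k \<ge> 1"
    using \<open>even s\<close> \<open>s \<ge> 4\<close> by (auto simp: k_def)
  have "N \<ge> 1"
    using assms by (simp add: N_def Suc_le_eq card_gt_0_iff)
  then have "K \<ge> 1"
    using \<open>\<delta> > 0\<close> by (simp add: K_def ge_one_powr_ge_zero)
  then have "K > 0"
    by simp
  have small_k: "energy k A \<le> N powr (2 * real k - \<nu>) * K"
    using False by (simp add: s(1) K_def flip: powr_add)
  have large_2k: "N powr (4 * real k - \<nu>) \<le> energy (2 * k) A"
    using energy_s by (simp add: s(1))
  obtain Q where Q: "Q \<subseteq> iterated_sumset k A" "Q \<noteq> {}"
    "N ^ (2 * k) / (2^80 * K^21) \<le> (\<Sum>x\<in>Q. real (rep_count k A x))^2"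
    "card Q \<le> 16 * K * N powr \<nu>" "card (Q + uminus ` Q) \<le> 2^312 * K^80 * card Q"
    using exists_structured_subset_of_sumset[where A=A and K=K and k=k and \<nu>=\<nu>, folded N_def,
        OF \<open>finite A\<close> \<open>A \<noteq> {}\<close> \<open>K > 0\<close> large_2k small_k] by blast
  have "finite Q"
    using Q(1) \<open>finite A\<close> finite_iterated_sumset finite_subset by blast
  obtain t where t: "N / (2^40 * K^82) \<le> card {a \<in> A. t + a \<in> Q}"
    using large_translate_of_popular_subset[where A=A and Q=Q and k=k and K=K, folded N_def,
        OF \<open>finite A\<close> \<open>A \<noteq> {}\<close> \<open>finite Q\<close> \<open>k \<ge> 1\<close> \<open>K \<ge> 1\<close> Q(3)] .
  define A' where "A' = {a \<in> A. t + a \<in> Q}"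
  have "N / (2^40 * K^82) = N powr (1 - 82 * \<delta>) / 2^40"
    using \<open>N \<ge> 1\<close> by (simp add: K_def powr_diff powr_power mult.commute)
  with t have "N powr (1 - 82 * \<delta>) / 2^40 \<le> card A'"
    by (simp add: A'_def)
  moreover have "card (sumdiff m n A') \<le> 16 * (2^312)^(m + n) * N powr (\<nu> + 240 * real (m + n) * \<delta>)" for m n
  proof -
    have "N powr \<nu> \<ge> 1"
      using \<open>N \<ge> 1\<close> \<open>\<nu> \<ge> 1\<close> by (simp add: ge_one_powr_ge_zero)
    then have "card (sumdiff m n A') \<le> 16 * (2^312)^(m + n) * (K^(240 * (m + n)) * N powr \<nu>)"
      by (intro card_sumdiff_le_power_bound[where t=t, OF \<open>finite Q\<close> Q(2) _ \<open>K \<ge> 1\<close> _ Q(5) Q(4)])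
        (simp_all add: A'_def)
    also have "K^(240 * (m + n)) * N powr \<nu> = N powr (\<nu> + 240 * real (m + n) * \<delta>)"
      using \<open>N \<ge> 1\<close> by (simp add: K_def powr_power powr_add mult_ac)
    finally show ?thesis .
  qed
  moreover have "A' \<subseteq> A"
    by (auto simp: A'_def)
  ultimately show ?thesis
    by blast
qed

theorem proposition2p3:
  "\<exists>c::real. c > 0 \<and> (\<exists>C :: nat \<Rightarrow> nat \<Rightarrow> real. (\<forall>m n. C m n > 0) \<and>
    (\<forall>(\<nu>::real) (\<delta>::real) (s::nat) (A::real set).
       \<nu> \<ge> 1 \<and> \<delta> > 0 \<and> even s \<and> s \<ge> 4 \<and> finite A \<and> A \<noteq> {} \<and>
       real (energy s A) \<ge> real (card A) powr (2 * real s - \<nu>)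
       \<longrightarrow>
       real (energy (s div 2) A) > real (card A) powr (real s - \<nu> + \<delta>)
       \<or> (\<exists>A' \<subseteq> A. real (card A') \<ge> c * real (card A) powr (1 - 82 * \<delta>) \<and>
             (\<forall>m n. real (card (sumdiff m n A'))
                 \<le> C m n * real (card A) powr (\<nu> + 240 * real (m + n) * \<delta>)))))"
proof (intro exI[of _ "1 / 2^40"] conjI exI[of _ "\<lambda>m n. 16 * (2^312)^(m + n)"] allI impI)
  show "(0::real) < 1 / 2^40" "0 < (\<lambda>m n. 16 * ((2::real)^312)^(m + n)) m n" for m n
    by simp_all
next
  fix \<nu> \<delta> :: real and s :: nat and A :: "real set"
  assume "\<nu> \<ge> 1 \<and> \<delta> > 0 \<and> even s \<and> s \<ge> 4 \<and> finite A \<and> A \<noteq> {} \<and>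
    real (energy s A) \<ge> real (card A) powr (2 * real s - \<nu>)"
  then show "real (energy (s div 2) A) > real (card A) powr (real s - \<nu> + \<delta>)
    \<or> (\<exists>A' \<subseteq> A. real (card A') \<ge> 1 / 2^40 * real (card A) powr (1 - 82 * \<delta>) \<and>
         (\<forall>m n. real (card (sumdiff m n A'))
            \<le> (\<lambda>m n. 16 * (2^312)^(m + n)) m n * real (card A) powr (\<nu> + 240 * real (m + n) * \<delta>)))"
    using energy_dichotomy_explicit[of \<nu> \<delta> s A] by auto
qed

end
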